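(* Let $\alpha>1$ and $\lambda>0$. Let $(N_x)_{x\in\mathbb Z}$ be independent Poisson random variables with intensity $\lambda$. Let $\{Y_i^{(x)}\}_{x\in\mathbb Z,\,i\in\mathbb N}$ be i.i.d. random variables, independent of $(N_x)$, with $$\mathbb P(Y_1^{(0)}=k)=\frac{|k|^{-(1+\alpha)}}{2\zeta(1+\alpha)}\quad\text{for } k\in\mathbb Z\setminus\{0\}.$$ Set $$S_n=\sum_{x=-n}^{n}\sum_{i=1}^{N_x}Y_i^{(x)}.$$ Then there exists $\beta=\beta_\alpha>0$ such that, for any $c>0$, uniformly in $k\ge cn$, $$\mathbb P(S_n=k)=\mathbb P\big(\exists\,x\in\{-n,\dots,n\}\text{ and } i\in\{1,\dots,N_x\}:\ Y_i^{(x)}=k\big)\,\big(1+O(n^{-\beta})\big)\quad\text{as } n\to\infty.$$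
   Context: $\zeta$ denotes the Riemann zeta function. *)

theory Defs
  imports "HOL-Probability.Probability"
begin

definition zeta_real :: "real \<Rightarrow> real" where
  "zeta_real s = (\<Sum>m. 1 / (real (Suc m)) powr s)"

end

theory Submission
  imports Defs
begin

text \<open>Conditionally on the total number \<open>m\<close> of jumps in the window, which is Poisson with mean
  \<open>\<mu> = (2 n + 1) \<lambda>\<close>, the jumps are i.i.d. with a regularly varying law \<open>p\<close>, and their sum hits a
  large \<open>k\<close> essentially only through a single big jump: \<open>P(Y\<^sub>1 + \<dots> + Y\<^sub>m = k) = m p(k) + error\<close>.
  With the threshold \<open>L = \<delta> k\<close> the error splits into the event that no jump exceeds \<open>L\<close>
  (a Chernoff bound for the truncated jumps, tilted by \<open>h = \<rho> ln k / L\<close>), the event that two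
  jumps exceed \<open>L\<close> (of order \<open>m\<^sup>2 p(L) P(\<bar>Y\<bar> > L)\<close>), and the fluctuation of \<open>p(k - r)\<close> in the sum
  \<open>r\<close> of the other jumps when exactly one is big (smoothness of \<open>p\<close> plus the truncated second
  moment). Averaging over \<open>m\<close> gives \<open>P(S\<^sub>n = k) = \<mu> p(k) (1 + O(k\<^sup>-\<^sup>\<beta>))\<close>, while the probability
  that some jump equals \<open>k\<close> is \<open>1 - exp (- \<mu> p(k)) = \<mu> p(k) (1 + O(\<mu> p(k)))\<close>. For \<open>k \<ge> c n\<close>
  both relative errors are \<open>O(n\<^sup>-\<^sup>\<beta>)\<close>.\<close>

lemma prob_pair_pmf_snd:
  "measure_pmf.prob (pair_pmf p q) S = measure_pmf.expectation q (\<lambda>g. measure_pmf.prob p {y. (y,g) \<in> S})"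
proof -
  have "emeasure (measure_pmf (pair_pmf p q)) S = emeasure (measure_pmf (pair_pmf q p)) ((\<lambda>(x, y). (y, x)) -` S)"
    by (subst pair_commute_pmf) (simp add: map_pmf_rep_eq emeasure_distr)
  also have "\<dots> = (\<integral>\<^sup>+x. indicator ((\<lambda>(x, y). (y, x)) -` S) x \<partial>pair_pmf q p)"
    by simp
  also have "\<dots> = (\<integral>\<^sup>+b. \<integral>\<^sup>+a. indicator S (a,b) \<partial>p \<partial>q)"
    by (subst nn_integral_pair_pmf') (auto intro!: nn_integral_cong simp: indicator_def)
  also have "\<dots> = (\<integral>\<^sup>+b. ennreal (measure_pmf.prob p {a. (a,b) \<in> S}) \<partial>q)"
  proof (intro nn_integral_cong)
    fix b
    have "(\<integral>\<^sup>+a. indicator S (a,b) \<partial>p) = (\<integral>\<^sup>+a. indicator {a. (a,b) \<in> S} a \<partial>p)"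
      by (intro nn_integral_cong) (auto simp: indicator_def)
    then show "(\<integral>\<^sup>+a. indicator S (a,b) \<partial>p) = ennreal (measure_pmf.prob p {a. (a,b) \<in> S})"
      by (simp add: measure_pmf.emeasure_eq_measure)
  qed
  also have "\<dots> = ennreal (measure_pmf.expectation q (\<lambda>g. measure_pmf.prob p {y. (y,g) \<in> S}))"
    by (intro nn_integral_eq_integral measure_pmf.integrable_const_bound[where B=1]) auto
  finally show ?thesis
    by (simp add: measure_pmf.emeasure_eq_measure)
qed

lemma expectation_pair_pmf_snd:
  fixes F :: "'a \<times> 'b \<Rightarrow> real"
  assumes "\<And>z. 0 \<le> F z" "\<And>z. F z \<le> B"
  shows "measure_pmf.expectation (pair_pmf p q) F =
         measure_pmf.expectation q (\<lambda>g. measure_pmf.expectation p (\<lambda>y. F (y,g)))"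
proof -
  have int: "integrable (measure_pmf r) G" if "\<And>z. 0 \<le> G z" "\<And>z. G z \<le> B" for r :: "'c pmf" and G
    by (intro measure_pmf.integrable_const_bound[where B=B]) (use that in auto)
  have nonneg: "0 \<le> measure_pmf.expectation p (\<lambda>y. F (y,g))" for g
    by (intro Bochner_Integration.integral_nonneg) (use assms in auto)
  have "ennreal (measure_pmf.expectation (pair_pmf p q) F) = (\<integral>\<^sup>+x. F x \<partial>pair_pmf p q)"
    by (intro nn_integral_eq_integral[symmetric] int) (use assms in auto)
  also have "\<dots> = (\<integral>\<^sup>+x. F (case x of (x,y) \<Rightarrow> (y,x)) \<partial>pair_pmf q p)"
    by (subst pair_commute_pmf) (simp add: case_prod_unfold)
  also have "\<dots> = (\<integral>\<^sup>+b. \<integral>\<^sup>+a. F (a,b) \<partial>p \<partial>q)"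
    by (subst nn_integral_pair_pmf') simp
  also have "\<dots> = (\<integral>\<^sup>+b. ennreal (measure_pmf.expectation p (\<lambda>y. F (y,b))) \<partial>q)"
    by (intro nn_integral_cong nn_integral_eq_integral int) (use assms in auto)
  also have "\<dots> = ennreal (measure_pmf.expectation q (\<lambda>g. measure_pmf.expectation p (\<lambda>y. F (y,g))))"
  proof (intro nn_integral_eq_integral int AE_I2 nonneg)
    show "measure_pmf.expectation p (\<lambda>y. F (y,g)) \<le> B" for g
      using measure_pmf.integral_le_const[of p "\<lambda>y. F (y,g)" B] int[of "\<lambda>y. F (y,g)" p] assms by auto
  qed
  finally show ?thesis
    by (subst (asm) ennreal_inj) (auto intro!: Bochner_Integration.integral_nonneg simp: assms)
qed

lemma prob_Pi_pmf_insert: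
  assumes "finite A" "a \<notin> A"
  shows "measure_pmf.prob (Pi_pmf (insert a A) d q) S =
         measure_pmf.expectation (Pi_pmf A d q) (\<lambda>g. measure_pmf.prob (q a) {y. g(a:=y) \<in> S})"
  using assms by (simp add: Pi_pmf_insert prob_pair_pmf_snd)

lemma expectation_Pi_pmf_insert:
  fixes F :: "_ \<Rightarrow> real"
  assumes "finite A" "a \<notin> A" "\<And>z. 0 \<le> F z" "\<And>z. F z \<le> B"
  shows "measure_pmf.expectation (Pi_pmf (insert a A) d q) F =
         measure_pmf.expectation (Pi_pmf A d q) (\<lambda>g. measure_pmf.expectation (q a) (\<lambda>y. F (g(a:=y))))"
  using assms by (simp add: Pi_pmf_insert case_prod_unfold expectation_pair_pmf_snd[where B=B])

lemma prob_Pi_pmf_exists: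
  assumes "finite A"
  shows "measure_pmf.prob (Pi_pmf A d (\<lambda>_. q)) {f. \<exists>a\<in>A. f a = k} = 1 - (1 - pmf q k) ^ card A"
proof -
  have "{f. \<exists>a\<in>A. f a = k} = UNIV - Pi A (\<lambda>_. UNIV - {k})" by auto
  then have "measure_pmf.prob (Pi_pmf A d (\<lambda>_. q)) {f. \<exists>a\<in>A. f a = k} =
             1 - measure_pmf.prob (Pi_pmf A d (\<lambda>_. q)) (Pi A (\<lambda>_. UNIV - {k}))"
    using measure_pmf.prob_compl[of "Pi A (\<lambda>_. UNIV - {k})" "Pi_pmf A d (\<lambda>_. q)"] by simp
  also have "measure_pmf.prob (Pi_pmf A d (\<lambda>_. q)) (Pi A (\<lambda>_. UNIV - {k})) =
             (\<Prod>a\<in>A. measure_pmf.prob q (UNIV - {k}))"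
    by (rule measure_Pi_pmf_Pi[OF assms])
  also have "\<dots> = (1 - pmf q k) ^ card A"
    using measure_pmf.prob_compl[of "{k}" q] by (simp add: measure_pmf_single)
  finally show ?thesis .
qed

lemma integrable_indicator_pmf: "integrable (measure_pmf q) (indicator S :: _ \<Rightarrow> real)"
  by (intro measure_pmf.integrable_const_bound[where B=1] AE_I2) auto

lemma nn_integral_count_space_int:
  fixes f :: "int \<Rightarrow> ennreal"
  shows "(\<integral>\<^sup>+j. f j \<partial>count_space UNIV) = (\<Sum>n. f (int n)) + (\<Sum>n. f (- int (Suc n)))"
proof -
  have "(\<integral>\<^sup>+j. f j \<partial>count_space UNIV) =
        (\<integral>\<^sup>+j. f j * indicator {0..} j + f j * indicator {..<0} j \<partial>count_space UNIV)"
    by (intro nn_integral_cong) (auto simp: indicator_def)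
  also have "\<dots> = (\<integral>\<^sup>+j. f j \<partial>count_space {0..}) + (\<integral>\<^sup>+j. f j \<partial>count_space {..<0})"
    by (subst nn_integral_add) (auto simp: nn_integral_count_space_indicator)
  also have "(\<integral>\<^sup>+j. f j \<partial>count_space {0..}) = (\<integral>\<^sup>+n. f (int n) \<partial>count_space UNIV)"
    by (rule nn_integral_bij_count_space[symmetric])
       (auto simp: bij_betw_def inj_on_def image_def intro!: exI[of _ "nat x" for x])
  also have "(\<integral>\<^sup>+j. f j \<partial>count_space {..<0}) = (\<integral>\<^sup>+n. f (- int (Suc n)) \<partial>count_space UNIV)"
    by (rule nn_integral_bij_count_space[symmetric])
       (auto simp: bij_betw_def inj_on_def image_def intro!: exI[of _ "nat (- x - 1)" for x])
  finally show ?thesis by (simp add: nn_integral_count_space_nat)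
qed

lemma sum_fun_upd_insert:
  assumes "finite A" "a \<notin> A"
  shows "(\<Sum>b\<in>insert a A. F ((g(a:=y)) b)) = F y + (\<Sum>b\<in>A. F (g b))"
proof -
  have "(\<Sum>b\<in>A. F ((g(a:=y)) b)) = (\<Sum>b\<in>A. F (g b))"
    by (rule sum.cong) (use assms in auto)
  then show ?thesis using assms by simp
qed

lemma abs_powr_diff_le:
  fixes a x y s :: real
  assumes "0 < a" "a \<le> x" "a \<le> y" "0 < s"
  shows "\<bar>x powr (-s) - y powr (-s)\<bar> \<le> s * a powr (-s-1) * \<bar>x - y\<bar>"
proof -
  have main: "\<bar>u powr (-s) - v powr (-s)\<bar> \<le> s * a powr (-s-1) * \<bar>u - v\<bar>" if "a \<le> u" "u < v" for u v
  proof -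
    have "\<exists>z. u < z \<and> z < v \<and> v powr (-s) - u powr (-s) = (v - u) * ((-s) * z powr (-s - 1))"
    proof (rule MVT2[OF \<open>u < v\<close>])
      fix x assume "u \<le> x" "x \<le> v"
      then have "0 < x" using that assms by auto
      then show "DERIV (\<lambda>z. z powr (-s)) x :> (-s) * x powr (-s - 1)"
        by (rule has_real_derivative_powr)
    qed
    then obtain z where z: "u < z" "z < v" "v powr (-s) - u powr (-s) = (v - u) * ((-s) * z powr (-s - 1))"
      by blast
    have "z powr (-s-1) \<le> a powr (-s-1)"
      using z that assms by (intro powr_mono2') auto
    then have "(v - u) * s * z powr (-s - 1) \<le> (v - u) * s * a powr (-s - 1)"
      using that assms by (intro mult_left_mono) auto
    moreover have "u powr (-s) - v powr (-s) = (v - u) * s * z powr (-s - 1)"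
      using z(3) by (simp add: algebra_simps)
    moreover have "0 \<le> (v - u) * s * z powr (-s - 1)" using that assms by simp
    ultimately show ?thesis using that by (simp add: algebra_simps)
  qed
  show ?thesis
  proof (cases x y rule: linorder_cases)
    case less then show ?thesis using main[of x y] assms by simp
  next
    case greater then show ?thesis using main[of y x] assms by (simp add: abs_minus_commute)
  qed simp
qed

lemma exp_le_one_plus_quad:
  fixes x :: real
  assumes "\<bar>x\<bar> \<le> 1"
  shows "exp x \<le> 1 + x + x^2"
proof (cases "0 \<le> x")
  case True then show ?thesis using assms exp_bound[of x] by simp
next
  case False
  define t where "t = - x"
  have t: "0 < t" "t \<le> 1" using False assms by (auto simp: t_def)
  have "exp x = 1 / exp t" by (simp add: t_def exp_minus field_simps)
  also have "\<dots> \<le> 1 / (1 + t)"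
    using t by (intro divide_left_mono) (auto simp: exp_ge_add_one_self add_pos_pos)
  also have "\<dots> \<le> 1 - t + t^2"
  proof -
    have "1 \<le> (1 + t) * (1 - t + t^2)" using t by (simp add: algebra_simps power2_eq_square power3_eq_cube)
    then show ?thesis using t by (simp add: field_simps)
  qed
  finally show ?thesis by (simp add: t_def)
qed

lemma exp_minus_one_minus_le:
  fixes x B :: real
  assumes "\<bar>x\<bar> \<le> B"
  shows "exp x - 1 - x \<le> exp B"
proof (cases "0 \<le> x")
  case True
  then have "exp x \<le> exp B" using assms by simp
  then show ?thesis using True by linarith
next
  case False
  then have "exp x \<le> 1" by simp
  moreover have "- x \<le> B" using assms by simp
  moreover have "B \<le> exp B" using exp_ge_add_one_self[of B] by linarith
  ultimately show ?thesis by linarith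
qed

lemma abs_one_minus_exp_minus_le:
  fixes x :: real
  assumes "0 \<le> x" "x \<le> 1"
  shows "\<bar>(1 - exp (- x)) - x\<bar> \<le> x^2"
proof -
  have "1 - x \<le> exp (- x)" using exp_ge_add_one_self[of "- x"] by simp
  moreover have "exp (- x) \<le> 1 + (- x) + (- x)^2" using assms by (intro exp_le_one_plus_quad) auto
  ultimately show ?thesis by (simp add: abs_le_iff)
qed

lemma ln_powr_le_powr:
  fixes K a \<epsilon> :: real
  assumes "1 \<le> K" "0 < a" "0 < \<epsilon>"
  shows "ln K powr a \<le> (a / \<epsilon>) powr a * K powr \<epsilon>"
proof -
  have "ln (K powr (\<epsilon> / a)) \<le> K powr (\<epsilon> / a) - 1" using assms by (intro ln_le_minus_one) auto
  then have "ln K \<le> K powr (\<epsilon> / a) / (\<epsilon> / a)" using assms by (simp add: ln_powr field_simps)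
  then have "ln K powr a \<le> (K powr (\<epsilon> / a) / (\<epsilon> / a)) powr a"
    using assms by (intro powr_mono2) auto
  also have "\<dots> = (K powr (\<epsilon> / a)) powr a / (\<epsilon> / a) powr a"
    using assms by (subst powr_divide) auto
  also have "\<dots> = (a / \<epsilon>) powr a * K powr \<epsilon>"
    using assms by (simp add: powr_powr powr_divide)
  finally show ?thesis .
qed

lemma powr_minus_le_of_ge_mult:
  fixes K c n e b :: real
  assumes "c * n \<le> K" "1 \<le> n" "0 < c" "b \<le> e" "0 \<le> b"
  shows "K powr (- e) \<le> c powr (- e) * n powr (- b)"
proof -
  have "K powr (- e) \<le> (c * n) powr (- e)"
    using assms by (intro powr_mono2') auto
  also have "\<dots> = c powr (- e) * n powr (- e)" using assms by (simp add: powr_mult)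
  also have "\<dots> \<le> c powr (- e) * n powr (- b)"
    using assms by (intro mult_left_mono powr_mono) auto
  finally show ?thesis .
qed

lemma (in prob_space) ex_pmf_eq_prob:
  fixes X :: "'a \<Rightarrow> 'b::countable"
  assumes "X \<in> measurable M (count_space UNIV)"
  shows "\<exists>q. \<forall>k. pmf q k = prob {\<omega> \<in> space M. X \<omega> = k}"
proof -
  let ?f = "\<lambda>k. prob {\<omega> \<in> space M. X \<omega> = k}"
  have "(\<integral>\<^sup>+k. ennreal (?f k) \<partial>count_space UNIV) = emeasure M (\<Union>k. {\<omega> \<in> space M. X \<omega> = k})"
    using assms by (subst emeasure_UN_countable)
      (auto simp: emeasure_eq_measure disjoint_family_on_def)
  also have "(\<Union>k. {\<omega> \<in> space M. X \<omega> = k}) = space M" by auto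
  finally have "(\<integral>\<^sup>+k. ennreal (?f k) \<partial>count_space UNIV) = 1" by (simp add: emeasure_space_1)
  then show ?thesis
    by (intro exI[of _ "embed_pmf ?f"] allI pmf_embed_pmf) auto
qed

lemma sum_prob_le_prob_plus_pairs:
  assumes "finite A" "\<And>a. a \<in> A \<Longrightarrow> D a \<subseteq> T"
  shows "(\<Sum>a\<in>A. measure_pmf.prob q (D a)) \<le>
         measure_pmf.prob q T + (\<Sum>a\<in>A. \<Sum>b\<in>A - {a}. measure_pmf.prob q (D a \<inter> D b))"
proof -
  have pointwise: "(\<Sum>a\<in>A. indicator (D a) x) \<le>
      indicator T x + (\<Sum>a\<in>A. \<Sum>b\<in>A - {a}. indicator (D a \<inter> D b) x :: real)" for x
  proof (cases "x \<in> T")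
    case False
    then have "indicator (D a) x = (0::real)" "indicator (D a \<inter> D b) x = (0::real)" if "a \<in> A" for a b
      using assms that by (auto simp: indicator_def)
    then show ?thesis using False by simp
  next
    case True
    define t where "t = (\<Sum>a\<in>A. indicator (D a) x :: real)"
    have "(\<Sum>a\<in>A. \<Sum>b\<in>A - {a}. indicator (D a \<inter> D b) x :: real) =
          (\<Sum>a\<in>A. indicator (D a) x * (t - indicator (D a) x))"
    proof (intro sum.cong refl)
      fix a assume a: "a \<in> A"
      have "(\<Sum>b\<in>A - {a}. indicator (D a \<inter> D b) x :: real) =
            indicator (D a) x * (\<Sum>b\<in>A - {a}. indicator (D b) x)"
        by (simp add: sum_distrib_left indicator_inter_arith)
      also have "(\<Sum>b\<in>A - {a}. indicator (D b) x) = t - indicator (D a) x"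
        unfolding t_def using assms(1) a by (simp add: sum.remove)
      finally show "(\<Sum>b\<in>A - {a}. indicator (D a \<inter> D b) x :: real) =
                    indicator (D a) x * (t - indicator (D a) x)" .
    qed
    also have "\<dots> = (\<Sum>a\<in>A. indicator (D a) x * t - indicator (D a) x)"
      by (intro sum.cong) (auto simp: algebra_simps indicator_def)
    also have "\<dots> = t * t - t"
      by (simp add: sum_subtractf sum_distrib_right t_def)
    finally show ?thesis
      using True zero_le_square[of "t - 1"] by (simp add: t_def[symmetric] algebra_simps)
  qed
  have "(\<Sum>a\<in>A. measure_pmf.prob q (D a)) = measure_pmf.expectation q (\<lambda>x. \<Sum>a\<in>A. indicator (D a) x)"
    by (subst Bochner_Integration.integral_sum) (auto intro: integrable_indicator_pmf)
  also have "\<dots> \<le> measure_pmf.expectation q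
      (\<lambda>x. indicator T x + (\<Sum>a\<in>A. \<Sum>b\<in>A - {a}. indicator (D a \<inter> D b) x))"
    by (intro Bochner_Integration.integral_mono pointwise)
       (auto intro!: Bochner_Integration.integrable_sum integrable_indicator_pmf)
  also have "\<dots> = measure_pmf.prob q T + (\<Sum>a\<in>A. \<Sum>b\<in>A - {a}. measure_pmf.prob q (D a \<inter> D b))"
    by (simp add: Bochner_Integration.integral_add Bochner_Integration.integral_sum
        Bochner_Integration.integrable_sum integrable_indicator_pmf)
  finally show ?thesis .
qed

definition poisson_weight :: "real \<Rightarrow> nat \<Rightarrow> real" where
  "poisson_weight l m = l ^ m / fact m * exp (- l)"

lemma poisson_weight_power_sums: "(\<lambda>m. poisson_weight l m * z ^ m) sums exp (l * (z - 1))"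
proof -
  have "(\<lambda>m. exp (- l) * ((l * z) ^ m / fact m)) sums (exp (- l) * exp (l * z))"
    using exp_converges[of "l * z"] by (intro sums_mult) (simp add: divide_inverse mult.commute)
  moreover have "exp (- l) * exp (l * z) = exp (l * (z - 1))" by (simp add: exp_add[symmetric] algebra_simps)
  ultimately show ?thesis by (simp add: poisson_weight_def power_mult_distrib algebra_simps)
qed

lemma poisson_weight_sums: "(\<lambda>m. poisson_weight l m) sums 1"
  using poisson_weight_power_sums[of l 1] by simp

lemma poisson_weight_Suc: "poisson_weight l (Suc n) * real (Suc n) = l * poisson_weight l n"
proof -
  have "real (Suc n) / fact (Suc n) = 1 / (fact n :: real)"
    by (simp del: of_nat_Suc)
  then show ?thesis
    by (simp add: poisson_weight_def)
qed

lemma poisson_weight_mean_sums: "(\<lambda>m. poisson_weight l m * real m) sums l"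
proof -
  have "(\<lambda>n. poisson_weight l (Suc n) * real (Suc n)) sums (l * 1)"
    unfolding poisson_weight_Suc by (intro sums_mult poisson_weight_sums)
  from sums_Suc_iff[THEN iffD1, OF this] show ?thesis by simp
qed

lemma poisson_weight_second_moment_sums: "(\<lambda>m. poisson_weight l m * (real m)^2) sums (l^2 + l)"
proof -
  have "poisson_weight l (Suc n) * (real (Suc n))^2 = l * (poisson_weight l n * real n + poisson_weight l n)" for n
  proof -
    have "poisson_weight l (Suc n) * (real (Suc n))^2 = (poisson_weight l (Suc n) * real (Suc n)) * real (Suc n)"
      by (simp add: power2_eq_square)
    also have "\<dots> = l * poisson_weight l n * real (Suc n)" by (simp only: poisson_weight_Suc)
    finally show ?thesis by (simp add: algebra_simps)
  qed
  moreover have "(\<lambda>n. l * (poisson_weight l n * real n + poisson_weight l n)) sums (l * (l + 1))"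
    by (intro sums_mult sums_add poisson_weight_mean_sums poisson_weight_sums)
  ultimately have "(\<lambda>n. poisson_weight l (Suc n) * (real (Suc n))^2) sums (l * (l + 1))" by simp
  from sums_Suc_iff[THEN iffD1, OF this] show ?thesis by (simp add: algebra_simps power2_eq_square)
qed

definition weak_compositions :: "'b set \<Rightarrow> nat \<Rightarrow> ('b \<Rightarrow> nat) set" where
  "weak_compositions F m = {\<nu> \<in> PiE F (\<lambda>_. UNIV). (\<Sum>x\<in>F. \<nu> x) = m}"

lemma finite_weak_compositions:
  assumes "finite F" shows "finite (weak_compositions F m)"
proof (rule finite_subset)
  show "weak_compositions F m \<subseteq> PiE F (\<lambda>_. {..m})"
  proof
    fix \<nu> assume \<nu>: "\<nu> \<in> weak_compositions F m"
    have "\<nu> x \<le> (\<Sum>x\<in>F. \<nu> x)" if "x \<in> F" for x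
      using assms that by (intro member_le_sum) auto
    then show "\<nu> \<in> PiE F (\<lambda>_. {..m})" using \<nu> by (auto simp: weak_compositions_def PiE_def Pi_def)
  qed
  show "finite (PiE F (\<lambda>_. {..m}))" using assms by (intro finite_PiE) auto
qed

lemma weak_compositions_insert:
  assumes "finite F" "z \<notin> F"
  shows "weak_compositions (insert z F) m =
         (\<lambda>(j, g). g(z := j)) ` (SIGMA j:{..m}. weak_compositions F (m - j))"
proof (intro set_eqI iffI)
  fix \<nu> assume \<nu>: "\<nu> \<in> weak_compositions (insert z F) m"
  define g where "g = \<nu>(z := undefined)"
  have sumF: "(\<Sum>x\<in>F. g x) = (\<Sum>x\<in>F. \<nu> x)"
    using assms by (intro sum.cong) (auto simp: g_def)
  have tot: "\<nu> z + (\<Sum>x\<in>F. \<nu> x) = m" using \<nu> assms by (simp add: weak_compositions_def)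
  have "g \<in> weak_compositions F (m - \<nu> z)"
    using \<nu> sumF tot by (auto simp: weak_compositions_def g_def PiE_def extensional_def)
  moreover have "\<nu> z \<in> {..m}" using tot by auto
  moreover have "\<nu> = g(z := \<nu> z)" by (simp add: g_def)
  ultimately show "\<nu> \<in> (\<lambda>(j, g). g(z := j)) ` (SIGMA j:{..m}. weak_compositions F (m - j))"
    by (intro rev_image_eqI[of "(\<nu> z, g)"]) auto
next
  fix \<nu> assume "\<nu> \<in> (\<lambda>(j, g). g(z := j)) ` (SIGMA j:{..m}. weak_compositions F (m - j))"
  then obtain j g where jg: "j \<le> m" "g \<in> weak_compositions F (m - j)" "\<nu> = g(z := j)" by auto
  have "(\<Sum>x\<in>F. \<nu> x) = (\<Sum>x\<in>F. g x)"
    using assms jg by (intro sum.cong) auto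
  then have "(\<Sum>x\<in>insert z F. \<nu> x) = j + (m - j)"
    using assms jg by (simp add: weak_compositions_def)
  then show "\<nu> \<in> weak_compositions (insert z F) m"
    using jg by (auto simp: weak_compositions_def PiE_def extensional_def)
qed

lemma inj_on_fun_upd_weak_compositions:
  assumes "z \<notin> F"
  shows "inj_on (\<lambda>(j, g). g(z := j)) (SIGMA j:{..m}. weak_compositions F (m - j))"
proof (rule inj_onI, clarify)
  fix j g j' g'
  assume a: "g \<in> weak_compositions F (m - j)" "g' \<in> weak_compositions F (m - j')"
    and eq: "g(z := j) = g'(z := j')"
  have "g z = g' z"
    using a assms by (auto simp: weak_compositions_def PiE_def extensional_def)
  then show "j = j' \<and> g = g'"
    using eq by (metis fun_upd_same fun_upd_triv fun_upd_upd)
qed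

text \<open>The multinomial theorem, in the form that makes the sum of independent Poisson counts Poisson.\<close>
lemma sum_weak_compositions_prod_power:
  fixes c :: real
  assumes "finite F"
  shows "(\<Sum>\<nu>\<in>weak_compositions F m. \<Prod>x\<in>F. c ^ (\<nu> x) / fact (\<nu> x)) = (real (card F) * c) ^ m / fact m"
  using assms
proof (induction F arbitrary: m rule: finite_induct)
  case empty
  show ?case
  proof (cases "m = 0")
    case True
    then have V: "weak_compositions {} m = {\<lambda>_. undefined}" by (auto simp: weak_compositions_def)
    show ?thesis unfolding V using True by simp
  next
    case False
    then have V: "weak_compositions {} m = {}" by (auto simp: weak_compositions_def)
    show ?thesis unfolding V using False by simp
  qed
next
  case (insert z F)
  let ?w = "\<lambda>F \<nu>. \<Prod>x\<in>F. c ^ (\<nu> x) / fact (\<nu> x)"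
  have "(\<Sum>\<nu>\<in>weak_compositions (insert z F) m. ?w (insert z F) \<nu>) =
        (\<Sum>(j, g)\<in>(SIGMA j:{..m}. weak_compositions F (m - j)). ?w (insert z F) (g(z := j)))"
    unfolding weak_compositions_insert[OF insert.hyps]
    by (subst sum.reindex[OF inj_on_fun_upd_weak_compositions[OF insert.hyps(2)]]) (simp add: case_prod_unfold)
  also have "\<dots> = (\<Sum>j\<le>m. \<Sum>g\<in>weak_compositions F (m - j). c ^ j / fact j * ?w F g)"
  proof (subst sum.Sigma[symmetric])
    show "\<forall>j\<in>{..m}. finite (weak_compositions F (m - j))"
      using insert.hyps finite_weak_compositions by auto
    have "?w F (g(z := j)) = ?w F g" for g j using insert.hyps by (intro prod.cong) auto
    then show "(\<Sum>j\<le>m. \<Sum>g\<in>weak_compositions F (m - j). ?w (insert z F) (g(z := j))) =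
               (\<Sum>j\<le>m. \<Sum>g\<in>weak_compositions F (m - j). c ^ j / fact j * ?w F g)"
      using insert.hyps by simp
  qed simp
  also have "\<dots> = (\<Sum>j\<le>m. c ^ j / fact j * ((real (card F) * c) ^ (m - j) / fact (m - j)))"
    by (simp only: sum_distrib_left[symmetric] insert.IH)
  also have "\<dots> = (\<Sum>j\<le>m. of_nat (m choose j) * c ^ j * (real (card F) * c) ^ (m - j)) / fact m"
    by (simp add: sum_divide_distrib binomial_fact field_simps)
  also have "\<dots> = (real (card (insert z F)) * c) ^ m / fact m"
    using insert.hyps by (simp add: binomial_ring algebra_simps)
  finally show ?case .
qed

lemma sq_plus_le_mult:
  fixes l \<mu> a K :: real
  assumes "0 < l" "l \<le> \<mu>" "\<mu> \<le> a * K"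
  shows "\<mu>^2 + \<mu> \<le> \<mu> * ((1 + 1 / l) * a * K)"
proof -
  have "\<mu> + 1 \<le> \<mu> * (1 + 1 / l)" using assms by (simp add: field_simps)
  also have "\<dots> \<le> (a * K) * (1 + 1 / l)" using assms by (intro mult_right_mono) auto
  finally have "\<mu> * (\<mu> + 1) \<le> \<mu> * ((1 + 1 / l) * a * K)"
    using assms by (intro mult_left_mono) (auto simp: algebra_simps)
  then show ?thesis by (simp add: power2_eq_square algebra_simps)
qed

section \<open>Power-law distributions\<close>

lemma zeta_real_pos:
  assumes "1 < s"
  shows "0 < zeta_real s"
proof -
  have "summable (\<lambda>n. real n powr (- s))" using assms by (simp add: summable_real_powr_iff)
  then have "summable (\<lambda>n. real (Suc n) powr (- s))" by (subst summable_Suc_iff)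
  then show ?thesis
    unfolding zeta_real_def powr_minus_divide[symmetric] by (rule suminf_pos) simp
qed

locale power_law =
  fixes p :: "int pmf" and \<alpha> Z :: real
  assumes alpha_gt_1: "1 < \<alpha>" and Z_pos: "0 < Z"
    and pmf_eq: "\<And>j. pmf p j = (if j = 0 then 0 else \<bar>real_of_int j\<bar> powr (-(1+\<alpha>)) / (2*Z))"
begin

abbreviation beyond :: "real \<Rightarrow> int set" where
  "beyond L \<equiv> {y. L < \<bar>real_of_int y\<bar>}"

definition pmf_bound :: "real \<Rightarrow> real" where
  "pmf_bound L = L powr (-(1+\<alpha>)) / (2*Z)"

definition tail :: "real \<Rightarrow> real" where
  "tail L = measure_pmf.prob p (beyond L)"

definition trunc :: "real \<Rightarrow> int \<Rightarrow> real" where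
  "trunc L y = (if \<bar>real_of_int y\<bar> \<le> L then real_of_int y else 0)"

definition trunc_var :: "real \<Rightarrow> real" where
  "trunc_var L = measure_pmf.expectation p (\<lambda>y. (trunc L y)^2)"

definition abs_moment :: "real \<Rightarrow> real" where
  "abs_moment \<gamma> = measure_pmf.expectation p (\<lambda>j. \<bar>real_of_int j\<bar> powr \<gamma>)"

definition mgf_trunc :: "real \<Rightarrow> real \<Rightarrow> real" where
  "mgf_trunc h L = measure_pmf.expectation p (\<lambda>y. exp (h * trunc L y))"

lemma pmf_pos_eq: "0 < k \<Longrightarrow> pmf p k = real_of_int k powr (-(1+\<alpha>)) / (2*Z)"
  by (simp add: pmf_eq)

lemma map_pmf_uminus: "map_pmf uminus p = p"
proof (rule pmf_eqI)
  fix j :: int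
  have "pmf (map_pmf uminus p) j = pmf (map_pmf uminus p) (uminus (-j))" by simp
  also have "\<dots> = pmf p (-j)" by (rule pmf_map_inj') (auto simp: inj_def)
  finally show "pmf (map_pmf uminus p) j = pmf p j" by (simp add: pmf_eq)
qed

lemma expectation_odd_eq_0:
  fixes f :: "int \<Rightarrow> real"
  assumes "\<And>y. f (-y) = - f y"
  shows "measure_pmf.expectation p f = 0"
proof -
  have "measure_pmf.expectation p f = measure_pmf.expectation (map_pmf uminus p) f"
    by (simp add: map_pmf_uminus)
  also have "\<dots> = - measure_pmf.expectation p f"
    by (simp add: assms)
  finally show ?thesis by simp
qed

lemma pmf_bound_nonneg: "0 \<le> pmf_bound L"
  using Z_pos by (simp add: pmf_bound_def)

lemma pmf_le_pmf_bound:
  assumes "0 < L" "L \<le> \<bar>real_of_int j\<bar>"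
  shows "pmf p j \<le> pmf_bound L"
proof -
  have "\<bar>real_of_int j\<bar> powr (-(1+\<alpha>)) \<le> L powr (-(1+\<alpha>))"
    using assms alpha_gt_1 by (intro powr_mono2') auto
  then show ?thesis using assms Z_pos by (auto simp: pmf_eq pmf_bound_def divide_right_mono)
qed

lemma pmf_bound_eq:
  assumes "0 < L" "0 < k"
  shows "pmf_bound L = (real_of_int k / L) powr (1+\<alpha>) * pmf p k"
proof -
  let ?t = "1 + \<alpha>"
  have e1: "(real_of_int k / L) powr ?t = real_of_int k powr ?t / L powr ?t"
    using assms by (simp add: powr_divide)
  have e2: "real_of_int k powr (-?t) = 1 / real_of_int k powr ?t" by (rule powr_minus_divide)
  have e3: "L powr (-?t) = 1 / L powr ?t" by (rule powr_minus_divide)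
  have "0 < real_of_int k powr ?t" using assms by simp
  then show ?thesis using Z_pos assms unfolding pmf_pos_eq[OF assms(2)] pmf_bound_def e1 e2 e3
    by (simp add: field_simps)
qed

lemma integrable_abs_powr:
  assumes "0 \<le> \<gamma>" "\<gamma> < \<alpha>"
  shows "integrable (measure_pmf p) (\<lambda>j. \<bar>real_of_int j\<bar> powr \<gamma>)"
proof (rule integrableI_bounded)
  define g where "g = (\<lambda>n::nat. real n powr (\<gamma> - 1 - \<alpha>) / (2*Z))"
  have sg: "summable g"
    unfolding g_def using assms by (intro summable_divide) (simp add: summable_real_powr_iff)
  have g0: "0 \<le> g n" for n using Z_pos by (simp add: g_def)
  have sg': "summable (\<lambda>n. g (Suc n))" using sg by (subst summable_Suc_iff)
  have powr_eq: "x powr (-(1+\<alpha>)) * x powr \<gamma> = x powr (\<gamma> - 1 - \<alpha>)" for x :: real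
  proof -
    have "\<gamma> - 1 - \<alpha> = -(1+\<alpha>) + \<gamma>" by simp
    then show ?thesis by (simp only: powr_add)
  qed
  have eq_pos: "ennreal (pmf p (int n)) * ennreal (\<bar>real_of_int (int n)\<bar> powr \<gamma>) = ennreal (g n)" for n
    using powr_eq[of "real n"] Z_pos
    by (cases "n = 0") (simp_all add: pmf_eq g_def ennreal_mult'[symmetric] ennreal_mult[symmetric])
  have eq_neg: "ennreal (pmf p (- int (Suc n))) * ennreal (\<bar>real_of_int (- int (Suc n))\<bar> powr \<gamma>) =
                ennreal (g (Suc n))" for n
    using powr_eq[of "real (Suc n)"] Z_pos
    by (simp add: pmf_eq g_def ennreal_mult'[symmetric] ennreal_mult[symmetric] del: of_nat_Suc)
  have "(\<integral>\<^sup>+ x. ennreal (norm (\<bar>real_of_int x\<bar> powr \<gamma>)) \<partial>measure_pmf p)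
      = (\<integral>\<^sup>+ x. ennreal (pmf p x) * ennreal (\<bar>real_of_int x\<bar> powr \<gamma>) \<partial>count_space UNIV)"
    by (simp add: nn_integral_measure_pmf)
  also have "\<dots> = ennreal (suminf g) + ennreal (\<Sum>n. g (Suc n))"
    using sg sg' g0 by (simp only: nn_integral_count_space_int eq_pos eq_neg suminf_ennreal2)
  also have "\<dots> < \<infinity>" by (simp add: ennreal_plus[symmetric] del: ennreal_plus)
  finally show "(\<integral>\<^sup>+ x. ennreal (norm (\<bar>real_of_int x\<bar> powr \<gamma>)) \<partial>measure_pmf p) < \<infinity>" .
qed simp

lemma abs_moment_nonneg: "0 \<le> abs_moment \<gamma>"
  unfolding abs_moment_def by (intro Bochner_Integration.integral_nonneg) auto

lemma tail_nonneg: "0 \<le> tail L"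
  by (simp add: tail_def)

lemma abs_trunc_le: "\<bar>trunc L y\<bar> \<le> max 0 L"
  by (auto simp: trunc_def)

lemma trunc_var_nonneg: "0 \<le> trunc_var L"
  unfolding trunc_var_def by (intro Bochner_Integration.integral_nonneg) auto

lemma integrable_trunc_fun:
  fixes F :: "real \<Rightarrow> real"
  assumes "continuous_on {-max 0 L..max 0 L} F"
  shows "integrable (measure_pmf q) (\<lambda>x. F (trunc L (g x)))"
proof -
  obtain B where "\<forall>t\<in>{-max 0 L..max 0 L}. norm (F t) \<le> B"
    using compact_imp_bounded[OF compact_continuous_image[OF assms compact_Icc]]
    by (auto simp: bounded_iff)
  then have "norm (F (trunc L (g x))) \<le> B" for x
    using abs_trunc_le[of L "g x"] by (auto simp: abs_le_iff)
  then show ?thesis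
    by (intro measure_pmf.integrable_const_bound[where B=B] AE_I2) auto
qed

lemma expectation_trunc: "measure_pmf.expectation p (trunc L) = 0"
  by (rule expectation_odd_eq_0) (simp add: trunc_def)

lemma tail_le_abs_moment:
  assumes "0 < L" "0 \<le> \<gamma>" "\<gamma> < \<alpha>"
  shows "tail L \<le> abs_moment \<gamma> / L powr \<gamma>"
proof -
  have "tail L = measure_pmf.expectation p (indicator (beyond L))"
    by (simp add: tail_def)
  also have "\<dots> \<le> measure_pmf.expectation p (\<lambda>j. \<bar>real_of_int j\<bar> powr \<gamma> / L powr \<gamma>)"
  proof (intro Bochner_Integration.integral_mono integrable_indicator_pmf)
    show "integrable (measure_pmf p) (\<lambda>j. \<bar>real_of_int j\<bar> powr \<gamma> / L powr \<gamma>)"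
      using integrable_abs_powr[OF assms(2,3)] by simp
    fix j :: int
    show "indicator (beyond L) j \<le> \<bar>real_of_int j\<bar> powr \<gamma> / L powr \<gamma>"
    proof (cases "L < \<bar>real_of_int j\<bar>")
      case True
      then have "L powr \<gamma> \<le> \<bar>real_of_int j\<bar> powr \<gamma>" using assms by (intro powr_mono2) auto
      then show ?thesis using True assms by (simp add: indicator_def)
    qed (simp add: indicator_def)
  qed
  also have "\<dots> = abs_moment \<gamma> / L powr \<gamma>" by (simp add: abs_moment_def)
  finally show ?thesis .
qed

lemma trunc_var_le:
  assumes "0 < L" "0 \<le> \<theta>" "\<theta> \<le> 1" "1 + \<theta> < \<alpha>"
  shows "trunc_var L \<le> L powr (1 - \<theta>) * abs_moment (1 + \<theta>)"
proof -
  have "trunc_var L \<le> measure_pmf.expectation p (\<lambda>j. L powr (1 - \<theta>) * \<bar>real_of_int j\<bar> powr (1+\<theta>))"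
    unfolding trunc_var_def
  proof (intro Bochner_Integration.integral_mono)
    show "integrable (measure_pmf p) (\<lambda>y. (trunc L y)\<^sup>2)"
      by (intro integrable_trunc_fun continuous_intros)
    show "integrable (measure_pmf p) (\<lambda>j. L powr (1 - \<theta>) * \<bar>real_of_int j\<bar> powr (1+\<theta>))"
      using integrable_abs_powr[of "1+\<theta>"] assms by simp
    fix j :: int
    show "(trunc L j)\<^sup>2 \<le> L powr (1 - \<theta>) * \<bar>real_of_int j\<bar> powr (1 + \<theta>)"
    proof (cases "\<bar>real_of_int j\<bar> \<le> L \<and> j \<noteq> 0")
      case True
      let ?x = "\<bar>real_of_int j\<bar>"
      have "(trunc L j)\<^sup>2 = ?x powr (1 - \<theta>) * ?x powr (1 + \<theta>)"
        using True by (simp add: trunc_def powr_add[symmetric] powr_numeral)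
      also have "\<dots> \<le> L powr (1 - \<theta>) * ?x powr (1 + \<theta>)"
        using True assms by (intro mult_right_mono powr_mono2) auto
      finally show ?thesis .
    qed (auto simp: trunc_def)
  qed
  also have "\<dots> = L powr (1 - \<theta>) * abs_moment (1 + \<theta>)" by (simp add: abs_moment_def)
  finally show ?thesis .
qed

text \<open>Taylor expansion of the exponential where \<open>h trunc L y\<close> is small, and the crude bound
  \<open>exp (h L)\<close> on the event \<open>\<bar>y\<bar> > 1 / h\<close>.\<close>
lemma mgf_trunc_le:
  assumes h: "0 < h" and L: "0 < L"
  shows "mgf_trunc h L \<le> 1 + h^2 * trunc_var L + exp (h * L) * tail (1 / h)"
proof -
  let ?g = "\<lambda>y. exp (h * trunc L y) - 1 - h * trunc L y"
  let ?u = "\<lambda>y. h^2 * (trunc L y)^2 + exp (h * L) * indicator (beyond (1 / h)) y"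
  have tb: "\<bar>trunc L y\<bar> \<le> L" for y using abs_trunc_le[of L y] L by simp
  have int_trunc: "integrable (measure_pmf p) (trunc L)"
    using integrable_trunc_fun[of L "\<lambda>t. t" p "\<lambda>y. y"] by simp
  have int_exp: "integrable (measure_pmf p) (\<lambda>y. exp (h * trunc L y))"
    by (intro integrable_trunc_fun continuous_intros)
  have int_sq: "integrable (measure_pmf p) (\<lambda>y. (trunc L y)^2)"
    by (intro integrable_trunc_fun continuous_intros)
  have int_u: "integrable (measure_pmf p) ?u"
    by (intro Bochner_Integration.integrable_add Bochner_Integration.integrable_mult_right
        int_sq integrable_indicator_pmf)
  have pw: "?g y \<le> ?u y" for y
  proof (cases "\<bar>trunc L y\<bar> \<le> 1 / h")
    case True
    then have "\<bar>h * trunc L y\<bar> \<le> 1" using h by (simp add: abs_mult field_simps)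
    then have "?g y \<le> h^2 * (trunc L y)^2"
      using exp_le_one_plus_quad[of "h * trunc L y"] by (simp add: power_mult_distrib)
    then show ?thesis by (simp add: add_increasing2)
  next
    case False
    then have "y \<in> beyond (1 / h)" using h by (auto simp: trunc_def split: if_splits)
    moreover have "\<bar>h * trunc L y\<bar> \<le> h * L" using tb[of y] h by (simp add: abs_mult)
    then have "?g y \<le> exp (h * L)" by (rule exp_minus_one_minus_le)
    ultimately show ?thesis by (simp add: add_increasing)
  qed
  have "mgf_trunc h L = 1 + h * measure_pmf.expectation p (trunc L) + measure_pmf.expectation p ?g"
    using int_exp int_trunc by (simp add: mgf_trunc_def)
  also have "\<dots> = 1 + measure_pmf.expectation p ?g" by (simp add: expectation_trunc)
  also have "measure_pmf.expectation p ?g \<le> measure_pmf.expectation p ?u"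
    by (intro Bochner_Integration.integral_mono pw) (use int_exp int_trunc int_u in auto)
  also have "measure_pmf.expectation p ?u = h^2 * trunc_var L + exp (h * L) * tail (1 / h)"
    using int_sq integrable_indicator_pmf[of p "beyond (1 / h)"] by (simp add: trunc_var_def tail_def)
  finally show ?thesis by simp
qed

end

section \<open>Sums of i.i.d. power-law variables\<close>

context power_law
begin

definition iid :: "'i set \<Rightarrow> ('i \<Rightarrow> int) pmf" where
  "iid A = Pi_pmf A 0 (\<lambda>_. p)"

lemma prob_iid_component:
  assumes "finite A" "a \<in> A"
  shows "measure_pmf.prob (iid A) {f. f a \<in> B} = measure_pmf.prob p B"
proof -
  have "measure_pmf.prob (iid A) {f. f a \<in> B} = measure_pmf.prob (map_pmf (\<lambda>f. f a) (iid A)) B"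
    by (simp add: vimage_def)
  also have "map_pmf (\<lambda>f. f a) (iid A) = p"
    using assms by (simp add: iid_def Pi_pmf_component)
  finally show ?thesis .
qed

lemma abs_sum_trunc_le: "\<bar>\<Sum>a\<in>A. trunc L (f a)\<bar> \<le> real (card A) * max 0 L"
proof -
  have "\<bar>\<Sum>a\<in>A. trunc L (f a)\<bar> \<le> (\<Sum>a\<in>A. \<bar>trunc L (f a)\<bar>)" by (rule sum_abs)
  also have "\<dots> \<le> (\<Sum>a\<in>A. max 0 L)" by (intro sum_mono abs_trunc_le)
  finally show ?thesis by simp
qed

lemma integrable_sum_trunc_fun:
  fixes F :: "real \<Rightarrow> real"
  assumes "continuous_on {-(real (card A) * max 0 L)..real (card A) * max 0 L} F"
  shows "integrable (measure_pmf q) (\<lambda>f. F (\<Sum>a\<in>A. trunc L (f a)))"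
proof -
  let ?R = "real (card A) * max 0 L"
  obtain B where "\<forall>t\<in>{-?R..?R}. norm (F t) \<le> B"
    using compact_imp_bounded[OF compact_continuous_image[OF assms compact_Icc]]
    by (auto simp: bounded_iff)
  then have "norm (F (\<Sum>a\<in>A. trunc L (f a))) \<le> B" for f
    using abs_sum_trunc_le[of L f A] by (auto simp: abs_le_iff)
  then show ?thesis
    by (intro measure_pmf.integrable_const_bound[where B=B] AE_I2) auto
qed

lemma expectation_iid_exp_sum_trunc:
  assumes "finite A"
  shows "measure_pmf.expectation (iid A) (\<lambda>f. exp (h * (\<Sum>a\<in>A. trunc L (f a)))) = mgf_trunc h L ^ card A"
proof -
  have "measure_pmf.expectation (iid A) (\<lambda>f. exp (h * (\<Sum>a\<in>A. trunc L (f a)))) =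
        measure_pmf.expectation (iid A) (\<lambda>f. \<Prod>a\<in>A. exp (h * trunc L (f a)))"
    by (simp add: sum_distrib_left exp_sum assms)
  also have "\<dots> = (\<Prod>a\<in>A. mgf_trunc h L)"
    unfolding iid_def mgf_trunc_def
    by (rule expectation_prod_Pi_pmf[OF assms]) (auto intro!: integrable_trunc_fun continuous_intros)
  finally show ?thesis by simp
qed

lemma prob_iid_sum_no_big_jump:
  assumes "finite A" "0 \<le> h"
  shows "measure_pmf.prob (iid A) {f. (\<Sum>a\<in>A. f a) = k \<and> (\<forall>a\<in>A. \<bar>real_of_int (f a)\<bar> \<le> L)} \<le>
         exp (- h * real_of_int k) * mgf_trunc h L ^ card A"
proof -
  let ?S = "{f. (\<Sum>a\<in>A. f a) = k \<and> (\<forall>a\<in>A. \<bar>real_of_int (f a)\<bar> \<le> L)}"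
  let ?G = "\<lambda>f. exp (- h * real_of_int k) * exp (h * (\<Sum>a\<in>A. trunc L (f a)))"
  have "measure_pmf.prob (iid A) ?S = measure_pmf.expectation (iid A) (indicator ?S)" by simp
  also have "\<dots> \<le> measure_pmf.expectation (iid A) ?G"
  proof (intro Bochner_Integration.integral_mono integrable_indicator_pmf)
    show "integrable (measure_pmf (iid A)) ?G"
      by (intro integrable_sum_trunc_fun continuous_intros)
    fix f
    show "indicator ?S f \<le> ?G f"
    proof (cases "f \<in> ?S")
      case True
      then have "(\<Sum>a\<in>A. trunc L (f a)) = real_of_int k"
        by (auto simp: trunc_def intro!: sum.cong)
      then show ?thesis using True by (simp add: exp_add[symmetric])
    qed simp
  qed
  also have "\<dots> = exp (- h * real_of_int k) * mgf_trunc h L ^ card A"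
    by (simp add: expectation_iid_exp_sum_trunc assms)
  finally show ?thesis .
qed

lemma expectation_iid_sum_trunc_sq:
  assumes "finite A"
  shows "measure_pmf.expectation (iid A) (\<lambda>f. (\<Sum>a\<in>A. trunc L (f a))^2) = real (card A) * trunc_var L"
  using assms
proof (induction rule: finite_induct)
  case empty
  then show ?case by (simp add: iid_def)
next
  case (insert a A)
  have int_trunc: "integrable (measure_pmf p) (trunc L)"
    using integrable_trunc_fun[of L "\<lambda>t. t" p "\<lambda>y. y"] by simp
  have int_sq: "integrable (measure_pmf p) (\<lambda>y. (trunc L y)^2)"
    by (intro integrable_trunc_fun continuous_intros)
  have "measure_pmf.expectation (iid (insert a A)) (\<lambda>f. (\<Sum>b\<in>insert a A. trunc L (f b))^2) =
        measure_pmf.expectation (iid A)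
          (\<lambda>g. measure_pmf.expectation p (\<lambda>y. (\<Sum>b\<in>insert a A. trunc L ((g(a:=y)) b))^2))"
    unfolding iid_def
  proof (rule expectation_Pi_pmf_insert[where B="(real (card (insert a A)) * max 0 L)^2", OF insert(1,2)])
    show "(\<Sum>b\<in>insert a A. trunc L (z b))^2 \<le> (real (card (insert a A)) * max 0 L)^2" for z
      using abs_sum_trunc_le[of L z "insert a A"] by (simp add: abs_le_square_iff[symmetric])
  qed simp
  also have "\<dots> = measure_pmf.expectation (iid A) (\<lambda>g. trunc_var L + (\<Sum>b\<in>A. trunc L (g b))^2)"
  proof (intro Bochner_Integration.integral_cong refl)
    fix g
    let ?c = "(\<Sum>b\<in>A. trunc L (g b))"
    have "(\<Sum>b\<in>insert a A. trunc L ((g(a:=y)) b)) = trunc L y + ?c" for y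
      by (rule sum_fun_upd_insert[OF insert(1,2)])
    then have "measure_pmf.expectation p (\<lambda>y. (\<Sum>b\<in>insert a A. trunc L ((g(a:=y)) b))^2) =
               measure_pmf.expectation p (\<lambda>y. (trunc L y)^2 + 2 * ?c * trunc L y + ?c^2)"
      by (simp add: power2_sum algebra_simps)
    also have "\<dots> = trunc_var L + ?c^2"
      using int_trunc int_sq by (simp add: trunc_var_def expectation_trunc)
    finally show "measure_pmf.expectation p (\<lambda>y. (\<Sum>b\<in>insert a A. trunc L ((g(a:=y)) b))^2) =
                  trunc_var L + ?c^2" .
  qed
  also have "\<dots> = trunc_var L + measure_pmf.expectation (iid A) (\<lambda>g. (\<Sum>b\<in>A. trunc L (g b))^2)"
    by (subst Bochner_Integration.integral_add) (auto intro!: integrable_sum_trunc_fun continuous_intros)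
  also have "\<dots> = trunc_var L + real (card A) * trunc_var L"
    using insert.IH by simp
  also have "\<dots> = real (card (insert a A)) * trunc_var L"
    using insert by (simp add: algebra_simps)
  finally show ?case .
qed

lemma expectation_iid_abs_sum_trunc:
  assumes "finite A" "0 < s"
  shows "measure_pmf.expectation (iid A) (\<lambda>f. \<bar>\<Sum>a\<in>A. trunc L (f a)\<bar>) \<le> (real (card A) * trunc_var L / s + s) / 2"
proof -
  have AM_GM: "\<bar>x\<bar> \<le> (x^2 / s + s) / 2" for x :: real
  proof -
    have "0 \<le> (\<bar>x\<bar> - s)^2" by simp
    then have "2 * \<bar>x\<bar> * s \<le> x^2 + s^2" by (simp add: power2_diff algebra_simps)
    then show ?thesis using assms by (simp add: field_simps power2_eq_square)
  qed
  have int_sq: "integrable (measure_pmf (iid A)) (\<lambda>f. (\<Sum>a\<in>A. trunc L (f a))^2)"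
    by (intro integrable_sum_trunc_fun continuous_intros)
  have "measure_pmf.expectation (iid A) (\<lambda>f. \<bar>\<Sum>a\<in>A. trunc L (f a)\<bar>) \<le>
        measure_pmf.expectation (iid A) (\<lambda>f. ((\<Sum>a\<in>A. trunc L (f a))^2 / s + s) / 2)"
    by (intro Bochner_Integration.integral_mono AM_GM integrable_sum_trunc_fun continuous_intros)
       (use int_sq assms in auto)
  also have "\<dots> = (real (card A) * trunc_var L / s + s) / 2"
    using int_sq assms by (simp add: expectation_iid_sum_trunc_sq)
  finally show ?thesis .
qed

lemma expectation_iid_count_big:
  assumes "finite A"
  shows "measure_pmf.expectation (iid A) (\<lambda>f. \<Sum>a\<in>A. indicator (beyond L) (f a)) = real (card A) * tail L"
proof -
  have "measure_pmf.expectation (iid A) (\<lambda>f. indicator (beyond L) (f a)) = tail L" if "a \<in> A" for a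
  proof -
    have "measure_pmf.expectation (iid A) (\<lambda>f. indicator (beyond L) (f a)) =
          measure_pmf.expectation (iid A) (indicator {f. f a \<in> beyond L})"
      by (intro Bochner_Integration.integral_cong) (auto simp: indicator_def)
    also have "\<dots> = measure_pmf.prob (iid A) {f. f a \<in> beyond L}"
      by simp
    also have "\<dots> = tail L"
      using prob_iid_component[OF assms that, of "beyond L"] by (simp add: tail_def)
    finally show ?thesis .
  qed
  moreover have "measure_pmf.expectation (iid A) (\<lambda>f. \<Sum>a\<in>A. indicator (beyond L) (f a) :: real) =
        (\<Sum>a\<in>A. measure_pmf.expectation (iid A) (\<lambda>f. indicator (beyond L) (f a)))"
    by (intro Bochner_Integration.integral_sum measure_pmf.integrable_const_bound[where B=1] AE_I2) auto
  ultimately show ?thesis by simp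
qed

text \<open>The probability that the sum is \<open>k\<close> given the other summands equal \<open>r\<close> in total, with the
  remaining summand big.\<close>
definition big_jump_pmf :: "int \<Rightarrow> real \<Rightarrow> int \<Rightarrow> real" where
  "big_jump_pmf k L r = (if L < \<bar>real_of_int (k - r)\<bar> then pmf p (k - r) else 0)"

lemma big_jump_pmf_nonneg: "0 \<le> big_jump_pmf k L r"
  by (simp add: big_jump_pmf_def)

lemma big_jump_pmf_le: "0 < L \<Longrightarrow> big_jump_pmf k L r \<le> pmf_bound L"
  by (auto simp: big_jump_pmf_def pmf_bound_nonneg intro: pmf_le_pmf_bound)

lemma prob_iid_sum_one_big_jump:
  assumes "finite A" "a \<notin> A"
  shows "measure_pmf.prob (iid (insert a A)) {f. (\<Sum>b\<in>insert a A. f b) = k \<and> f a \<in> beyond L} =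
         measure_pmf.expectation (iid A) (\<lambda>g. big_jump_pmf k L (\<Sum>b\<in>A. g b))"
  unfolding iid_def prob_Pi_pmf_insert[OF assms]
proof (intro Bochner_Integration.integral_cong refl)
  fix g :: "'a \<Rightarrow> int"
  have "(\<Sum>b\<in>insert a A. (g(a:=y)) b) = y + (\<Sum>b\<in>A. g b)" for y
    using sum_fun_upd_insert[OF assms, of "\<lambda>x. x"] by simp
  then have "{y. g(a:=y) \<in> {f. (\<Sum>b\<in>insert a A. f b) = k \<and> f a \<in> beyond L}} =
             (if L < \<bar>real_of_int (k - (\<Sum>b\<in>A. g b))\<bar> then {k - (\<Sum>b\<in>A. g b)} else {})"
    by auto
  then show "measure_pmf.prob p {y. g(a:=y) \<in> {f. (\<Sum>b\<in>insert a A. f b) = k \<and> f a \<in> beyond L}} =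
             big_jump_pmf k L (\<Sum>b\<in>A. g b)"
    by (simp add: big_jump_pmf_def measure_pmf_single)
qed

lemma prob_iid_sum_two_big_jumps:
  assumes "finite A" "a \<in> A" "b \<in> A" "a \<noteq> b" "0 < L"
  shows "measure_pmf.prob (iid A) {f. (\<Sum>c\<in>A. f c) = k \<and> f a \<in> beyond L \<and> f b \<in> beyond L}
         \<le> pmf_bound L * tail L"
proof -
  obtain B where A: "A = insert b B" and b: "b \<notin> B"
    using mk_disjoint_insert[OF assms(3)] by blast
  have B: "finite B" "a \<in> B" using assms A by auto
  let ?S = "{f. (\<Sum>c\<in>A. f c) = k \<and> f a \<in> beyond L \<and> f b \<in> beyond L}"
  have "measure_pmf.prob (iid A) ?S =
        measure_pmf.expectation (iid B) (\<lambda>g. measure_pmf.prob p {y. g(b:=y) \<in> ?S})"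
    unfolding iid_def A by (rule prob_Pi_pmf_insert[OF B(1) b])
  also have "\<dots> \<le> measure_pmf.expectation (iid B) (\<lambda>g. pmf_bound L * indicator (beyond L) (g a))"
  proof (intro Bochner_Integration.integral_mono)
    show "integrable (measure_pmf (iid B)) (\<lambda>g. measure_pmf.prob p {y. g(b:=y) \<in> ?S})"
      by (intro measure_pmf.integrable_const_bound[where B=1] AE_I2) auto
    show "integrable (measure_pmf (iid B)) (\<lambda>g. pmf_bound L * indicator (beyond L) (g a))"
      by (intro measure_pmf.integrable_const_bound[where B="\<bar>pmf_bound L\<bar>"] AE_I2) (auto simp: indicator_def)
    fix g :: "'a \<Rightarrow> int"
    have "(\<Sum>c\<in>A. (g(b:=y)) c) = y + (\<Sum>c\<in>B. g c)" for y
      using sum_fun_upd_insert[OF B(1) b, of "\<lambda>x. x"] A by simp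
    then have "{y. g(b:=y) \<in> ?S} =
        (if g a \<in> beyond L \<and> k - (\<Sum>c\<in>B. g c) \<in> beyond L then {k - (\<Sum>c\<in>B. g c)} else {})"
      using assms(4) by auto
    then show "measure_pmf.prob p {y. g(b:=y) \<in> ?S} \<le> pmf_bound L * indicator (beyond L) (g a)"
      using assms(5) by (auto simp: measure_pmf_single pmf_le_pmf_bound pmf_bound_nonneg)
  qed
  also have "\<dots> = pmf_bound L * measure_pmf.expectation (iid B) (indicator {g. g a \<in> beyond L})"
    by (subst Bochner_Integration.integral_mult_right_zero[symmetric], intro Bochner_Integration.integral_cong)
       (auto simp: indicator_def)
  also have "\<dots> = pmf_bound L * tail L"
    using prob_iid_component[OF B, of "beyond L"] by (simp add: tail_def)
  finally show ?thesis .
qed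

definition smooth_const :: "int \<Rightarrow> real \<Rightarrow> real" where
  "smooth_const k L = (1+\<alpha>) * 2 powr (2+\<alpha>) + 2 + 2 * (real_of_int k / L) powr (1+\<alpha>)"

lemma smooth_const_nonneg: "0 \<le> smooth_const k L"
  unfolding smooth_const_def using alpha_gt_1 by (intro add_nonneg_nonneg) auto

text \<open>For \<open>\<bar>r\<bar> \<le> k / 2\<close> this is the mean value theorem for \<open>x powr -(1+\<alpha>)\<close> on \<open>[k/2, \<infinity>)\<close>;
  otherwise both sides are crudely bounded by \<open>pmf_bound L + pmf p k\<close>.\<close>
lemma abs_big_jump_pmf_diff_le:
  assumes k: "0 < k" and L: "0 < L" "2 * L < real_of_int k"
  shows "\<bar>big_jump_pmf k L r - pmf p k\<bar> \<le> smooth_const k L * pmf p k * \<bar>real_of_int r\<bar> / real_of_int k"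
proof (cases "\<bar>real_of_int r\<bar> \<le> real_of_int k / 2")
  case True
  let ?s = "1 + \<alpha>"
  have kr: "real_of_int k / 2 \<le> real_of_int (k - r)" using True by linarith
  then have "big_jump_pmf k L r = pmf p (k - r)" using L by (simp add: big_jump_pmf_def)
  then have "\<bar>big_jump_pmf k L r - pmf p k\<bar> =
             \<bar>real_of_int (k - r) powr (-?s) - real_of_int k powr (-?s)\<bar> / (2*Z)"
    using k kr Z_pos by (simp add: pmf_eq diff_divide_distrib[symmetric])
  also have "\<dots> \<le> ?s * (real_of_int k / 2) powr (-?s-1) * \<bar>real_of_int (k-r) - real_of_int k\<bar> / (2*Z)"
    using k kr alpha_gt_1 Z_pos by (intro divide_right_mono abs_powr_diff_le) auto
  also have "(real_of_int k / 2) powr (-?s-1) = 2 powr (2+\<alpha>) * real_of_int k powr (-?s) / real_of_int k"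
  proof -
    have e0: "-?s-1 = -(2+\<alpha>)" by simp
    have e1: "(real_of_int k / 2) powr (2+\<alpha>) = real_of_int k powr (2+\<alpha>) / 2 powr (2+\<alpha>)"
      using k by (simp add: powr_divide)
    have e2: "real_of_int k powr (2+\<alpha>) = real_of_int k powr ?s * real_of_int k"
      using k powr_add[of "real_of_int k" ?s 1] by (simp add: add.commute add.left_commute)
    have e3: "real_of_int k powr (-?s) = 1 / real_of_int k powr ?s" by (rule powr_minus_divide)
    have "0 < real_of_int k powr ?s" using k by simp
    then show ?thesis unfolding e0 powr_minus_divide[of _ "2+\<alpha>"] e1 e2 e3 using k
      by (simp add: field_simps)
  qed
  finally have "\<bar>big_jump_pmf k L r - pmf p k\<bar> \<le> (1+\<alpha>) * 2 powr (2+\<alpha>) * pmf p k * \<bar>real_of_int r\<bar> / real_of_int k"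
    using k by (simp add: pmf_eq field_simps)
  also have "\<dots> \<le> smooth_const k L * pmf p k * \<bar>real_of_int r\<bar> / real_of_int k"
    using k L by (intro divide_right_mono mult_right_mono) (auto simp: smooth_const_def)
  finally show ?thesis .
next
  case False
  have r1: "1 \<le> 2 * \<bar>real_of_int r\<bar> / real_of_int k" using False k by (simp add: field_simps)
  have "\<bar>big_jump_pmf k L r - pmf p k\<bar> \<le> pmf_bound L + pmf p k"
    using big_jump_pmf_nonneg[of k L r] big_jump_pmf_le[OF L(1), of k r] pmf_nonneg[of p k] by linarith
  also have "\<dots> = ((real_of_int k / L) powr (1+\<alpha>) + 1) * pmf p k"
    using pmf_bound_eq[OF L(1) k] by (simp add: algebra_simps)
  also have "\<dots> \<le> ((real_of_int k / L) powr (1+\<alpha>) + 1) * pmf p k * (2 * \<bar>real_of_int r\<bar> / real_of_int k)"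
    using mult_left_mono[OF r1, of "((real_of_int k / L) powr (1+\<alpha>) + 1) * pmf p k"] by simp
  also have "\<dots> \<le> smooth_const k L * pmf p k * \<bar>real_of_int r\<bar> / real_of_int k"
  proof -
    have "((real_of_int k / L) powr (1+\<alpha>) + 1) * 2 \<le> smooth_const k L"
      unfolding smooth_const_def using alpha_gt_1 by (simp add: algebra_simps)
    then have "((real_of_int k / L) powr (1+\<alpha>) + 1) * 2 * (pmf p k * \<bar>real_of_int r\<bar> / real_of_int k)
               \<le> smooth_const k L * (pmf p k * \<bar>real_of_int r\<bar> / real_of_int k)"
      using k by (intro mult_right_mono) auto
    then show ?thesis by (simp add: algebra_simps)
  qed
  finally show ?thesis .
qed

lemma abs_big_jump_pmf_sum_diff_le:
  assumes "finite A" and k: "0 < k" and L: "0 < L" "2 * L < real_of_int k"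
  shows "\<bar>big_jump_pmf k L (\<Sum>b\<in>A. g b) - pmf p k\<bar> \<le>
         pmf_bound L * (\<Sum>b\<in>A. indicator (beyond L) (g b)) +
         smooth_const k L * pmf p k * \<bar>\<Sum>b\<in>A. trunc L (g b)\<bar> / real_of_int k"
proof (cases "\<forall>b\<in>A. \<bar>real_of_int (g b)\<bar> \<le> L")
  case True
  then have "(\<Sum>b\<in>A. trunc L (g b)) = real_of_int (\<Sum>b\<in>A. g b)" by (simp add: trunc_def)
  moreover have "0 \<le> pmf_bound L * (\<Sum>b\<in>A. indicator (beyond L) (g b) :: real)"
    using pmf_bound_nonneg by (intro mult_nonneg_nonneg sum_nonneg) auto
  ultimately show ?thesis using abs_big_jump_pmf_diff_le[OF k L, of "\<Sum>b\<in>A. g b"] by simp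
next
  case False
  then obtain b where b: "b \<in> A" "g b \<in> beyond L" by auto
  have "1 \<le> (\<Sum>b\<in>A. indicator (beyond L) (g b) :: real)"
    using member_le_sum[of b A "\<lambda>b. indicator (beyond L) (g b) :: real"] assms(1) b by auto
  then have "pmf_bound L \<le> pmf_bound L * (\<Sum>b\<in>A. indicator (beyond L) (g b))"
    using pmf_bound_nonneg[of L] mult_left_mono by fastforce
  moreover have "\<bar>big_jump_pmf k L (\<Sum>b\<in>A. g b) - pmf p k\<bar> \<le> pmf_bound L"
    using big_jump_pmf_nonneg big_jump_pmf_le[OF L(1)] pmf_le_pmf_bound[OF L(1), of k] L
    by (simp add: abs_le_iff) (smt (verit) pmf_nonneg)
  moreover have "0 \<le> smooth_const k L * pmf p k * \<bar>\<Sum>b\<in>A. trunc L (g b)\<bar> / real_of_int k"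
    using smooth_const_nonneg k by simp
  ultimately show ?thesis by linarith
qed

definition one_big_jump_err :: "real \<Rightarrow> int \<Rightarrow> real \<Rightarrow> real \<Rightarrow> real" where
  "one_big_jump_err n k L s =
     pmf_bound L * n * tail L + smooth_const k L * pmf p k * ((n * trunc_var L / s + s) / 2) / real_of_int k"

lemma one_big_jump_err_mono:
  assumes "n \<le> m" "0 < k" "0 < s"
  shows "one_big_jump_err n k L s \<le> one_big_jump_err m k L s"
  unfolding one_big_jump_err_def using assms pmf_bound_nonneg tail_nonneg trunc_var_nonneg smooth_const_nonneg
  by (intro add_mono divide_right_mono mult_left_mono mult_right_mono) (auto simp: mult_nonneg_nonneg)

lemma prob_iid_sum_one_big_jump_approx:
  assumes "finite A" "a \<in> A" and k: "0 < k" and L: "0 < L" "2 * L < real_of_int k" and s: "0 < s"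
  shows "\<bar>measure_pmf.prob (iid A) {f. (\<Sum>b\<in>A. f b) = k \<and> f a \<in> beyond L} - pmf p k\<bar>
         \<le> one_big_jump_err (real (card A)) k L s"
proof -
  obtain B where AB: "A = insert a B" "a \<notin> B"
    using mk_disjoint_insert[OF assms(2)] by blast
  have B: "finite B" using assms(1) AB(1) by simp
  let ?cnt = "\<lambda>g. \<Sum>b\<in>B. indicator (beyond L) (g b) :: real"
  let ?sum = "\<lambda>g. \<bar>\<Sum>b\<in>B. trunc L (g b)\<bar>"
  have int_big: "integrable (measure_pmf (iid B)) (\<lambda>g. big_jump_pmf k L (\<Sum>b\<in>B. g b))"
    by (intro measure_pmf.integrable_const_bound[where B="pmf_bound L"] AE_I2)
       (use big_jump_pmf_nonneg big_jump_pmf_le L in auto)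
  have int_cnt: "integrable (measure_pmf (iid B)) ?cnt"
    by (intro Bochner_Integration.integrable_sum measure_pmf.integrable_const_bound[where B=1] AE_I2) auto
  have int_sum: "integrable (measure_pmf (iid B)) ?sum"
    by (intro integrable_sum_trunc_fun continuous_intros)
  have "\<bar>measure_pmf.prob (iid A) {f. (\<Sum>b\<in>A. f b) = k \<and> f a \<in> beyond L} - pmf p k\<bar>
        = \<bar>measure_pmf.expectation (iid B) (\<lambda>g. big_jump_pmf k L (\<Sum>b\<in>B. g b) - pmf p k)\<bar>"
    unfolding AB(1) prob_iid_sum_one_big_jump[OF B AB(2)] using int_big by simp
  also have "\<dots> \<le> measure_pmf.expectation (iid B) (\<lambda>g. \<bar>big_jump_pmf k L (\<Sum>b\<in>B. g b) - pmf p k\<bar>)"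
    by (rule integral_abs_bound)
  also have "\<dots> \<le> measure_pmf.expectation (iid B)
      (\<lambda>g. pmf_bound L * ?cnt g + smooth_const k L * pmf p k * ?sum g / real_of_int k)"
    by (intro Bochner_Integration.integral_mono abs_big_jump_pmf_sum_diff_le B k L)
       (use int_big int_cnt int_sum in auto)
  also have "\<dots> = pmf_bound L * measure_pmf.expectation (iid B) ?cnt +
      smooth_const k L * pmf p k * measure_pmf.expectation (iid B) ?sum / real_of_int k"
    using int_cnt int_sum by simp
  also have "\<dots> \<le> one_big_jump_err (real (card B)) k L s"
  proof -
    have "smooth_const k L * pmf p k * measure_pmf.expectation (iid B) ?sum / real_of_int k \<le>
          smooth_const k L * pmf p k * ((real (card B) * trunc_var L / s + s) / 2) / real_of_int k"
      using expectation_iid_abs_sum_trunc[OF B s, of L] smooth_const_nonneg[of k L] k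
      by (intro divide_right_mono mult_left_mono) auto
    then show ?thesis
      by (simp add: one_big_jump_err_def expectation_iid_count_big[OF B] mult.assoc)
  qed
  also have "\<dots> \<le> one_big_jump_err (real (card A)) k L s"
    using AB B k s by (intro one_big_jump_err_mono) auto
  finally show ?thesis .
qed

definition iid_sum_err :: "int \<Rightarrow> real \<Rightarrow> real \<Rightarrow> real \<Rightarrow> nat \<Rightarrow> real" where
  "iid_sum_err k L s h m =
     exp (- h * real_of_int k) * mgf_trunc h L ^ m + 2 * (real m)^2 * pmf_bound L * tail L
     + smooth_const k L * pmf p k * ((real m)^2 * trunc_var L / s + real m * s) / (2 * real_of_int k)"

text \<open>The three error terms bound the events that no summand exceeds \<open>L\<close> (Chernoff), that two
  summands do (Bonferroni), and the fluctuation of the others when exactly one does.\<close>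
lemma prob_iid_sum_approx:
  assumes A: "finite A" and k: "0 < k" and L: "0 < L" "2 * L < real_of_int k" and s: "0 < s" and h: "0 \<le> h"
  shows "\<bar>measure_pmf.prob (iid A) {f. (\<Sum>a\<in>A. f a) = k} - real (card A) * pmf p k\<bar> \<le> iid_sum_err k L s h (card A)"
proof -
  define m where "m = real (card A)"
  define T where "T = {f. (\<Sum>a\<in>A. f a) = k}"
  define D where "D = (\<lambda>a. {f. (\<Sum>b\<in>A. f b) = k \<and> f a \<in> beyond L})"
  define E0 where "E0 = {f. (\<Sum>a\<in>A. f a) = k \<and> (\<forall>a\<in>A. \<bar>real_of_int (f a)\<bar> \<le> L)}"
  define e where "e = one_big_jump_err m k L s"
  let ?P = "measure_pmf.prob (iid A)"
  have one: "\<bar>?P (D a) - pmf p k\<bar> \<le> e" if "a \<in> A" for a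
    using prob_iid_sum_one_big_jump_approx[OF A that k L s] by (simp add: D_def e_def m_def)
  have pair: "?P (D a \<inter> D b) \<le> pmf_bound L * tail L" if "a \<in> A" "b \<in> A - {a}" for a b
  proof -
    have "D a \<inter> D b = {f. (\<Sum>c\<in>A. f c) = k \<and> f a \<in> beyond L \<and> f b \<in> beyond L}"
      by (auto simp: D_def)
    then show ?thesis using prob_iid_sum_two_big_jumps[OF A _ _ _ L(1)] that by auto
  qed
  have union_bound: "?P T \<le> ?P E0 + (\<Sum>a\<in>A. ?P (D a))"
  proof -
    have "?P T \<le> ?P (E0 \<union> (\<Union>a\<in>A. D a))"
      by (intro measure_pmf.finite_measure_mono) (auto simp: T_def E0_def D_def not_le)
    also have "\<dots> \<le> ?P E0 + ?P (\<Union>a\<in>A. D a)" by (rule measure_subadditive) auto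
    also have "?P (\<Union>a\<in>A. D a) \<le> (\<Sum>a\<in>A. ?P (D a))"
      by (rule measure_pmf.finite_measure_subadditive_finite) (use A in auto)
    finally show ?thesis by simp
  qed
  have bonferroni: "(\<Sum>a\<in>A. ?P (D a)) \<le> ?P T + (\<Sum>a\<in>A. \<Sum>b\<in>A - {a}. ?P (D a \<inter> D b))"
    by (rule sum_prob_le_prob_plus_pairs) (use A in \<open>auto simp: D_def T_def\<close>)
  have pairs: "(\<Sum>a\<in>A. \<Sum>b\<in>A - {a}. ?P (D a \<inter> D b)) \<le> m^2 * (pmf_bound L * tail L)"
  proof -
    have "(\<Sum>a\<in>A. \<Sum>b\<in>A - {a}. ?P (D a \<inter> D b)) \<le> (\<Sum>a\<in>A. \<Sum>b\<in>A - {a}. pmf_bound L * tail L)"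
      by (intro sum_mono pair) auto
    also have "\<dots> \<le> (\<Sum>a\<in>A. \<Sum>b\<in>A. pmf_bound L * tail L)"
      using A pmf_bound_nonneg tail_nonneg by (intro sum_mono sum_mono2) auto
    finally show ?thesis by (simp add: m_def power2_eq_square)
  qed
  have one_sum: "\<bar>(\<Sum>a\<in>A. ?P (D a)) - m * pmf p k\<bar> \<le> m * e"
  proof -
    have "\<bar>(\<Sum>a\<in>A. ?P (D a)) - m * pmf p k\<bar> = \<bar>\<Sum>a\<in>A. ?P (D a) - pmf p k\<bar>"
      by (simp add: m_def sum_subtractf)
    also have "\<dots> \<le> (\<Sum>a\<in>A. e)" using one by (intro order.trans[OF sum_abs] sum_mono) auto
    finally show ?thesis by (simp add: m_def)
  qed
  have no_big: "?P E0 \<le> exp (- h * real_of_int k) * mgf_trunc h L ^ card A"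
    unfolding E0_def by (rule prob_iid_sum_no_big_jump[OF A h])
  have err: "m * e = m^2 * (pmf_bound L * tail L) +
      smooth_const k L * pmf p k * (m^2 * trunc_var L / s + m * s) / (2 * real_of_int k)"
    using k s by (simp add: e_def one_big_jump_err_def field_simps power2_eq_square)
  have two: "2 * m^2 * pmf_bound L * tail L = 2 * (m^2 * (pmf_bound L * tail L))" by simp
  have c: "0 \<le> m^2 * (pmf_bound L * tail L)" using pmf_bound_nonneg tail_nonneg by simp
  show ?thesis
    unfolding iid_sum_err_def T_def[symmetric] m_def[symmetric]
    by (rule abs_leI; insert err two c measure_nonneg[of "iid A" E0] union_bound bonferroni pairs
        abs_le_D1[OF one_sum] abs_le_D2[OF one_sum] no_big; linarith)
qed

definition poisson_iid_sum_err :: "real \<Rightarrow> int \<Rightarrow> real \<Rightarrow> real \<Rightarrow> real \<Rightarrow> real" where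
  "poisson_iid_sum_err \<mu> k L s h =
     exp (- h * real_of_int k) * exp (\<mu> * (mgf_trunc h L - 1)) + 2 * pmf_bound L * tail L * (\<mu>^2 + \<mu>)
     + smooth_const k L * pmf p k / (2 * real_of_int k) * (trunc_var L / s * (\<mu>^2 + \<mu>) + s * \<mu>)"

lemma iid_sum_err_poisson_sums:
  "(\<lambda>m. poisson_weight \<mu> m * iid_sum_err k L s h m) sums poisson_iid_sum_err \<mu> k L s h"
proof -
  have "(\<lambda>m. exp (- h * real_of_int k) * (poisson_weight \<mu> m * mgf_trunc h L ^ m)
          + 2 * pmf_bound L * tail L * (poisson_weight \<mu> m * (real m)^2)
          + smooth_const k L * pmf p k / (2 * real_of_int k) *
              (trunc_var L / s * (poisson_weight \<mu> m * (real m)^2) + s * (poisson_weight \<mu> m * real m)))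
        sums poisson_iid_sum_err \<mu> k L s h"
    unfolding poisson_iid_sum_err_def
    by (intro sums_add sums_mult poisson_weight_power_sums poisson_weight_second_moment_sums
        poisson_weight_mean_sums)
  then show ?thesis by (simp add: iid_sum_err_def field_simps)
qed

end

section \<open>The compound Poisson model\<close>

lemma countable_set_in_sets_PiM:
  fixes G :: "('i \<Rightarrow> 'b::countable) set"
  assumes "finite I" "G \<subseteq> PiE I (\<lambda>_. UNIV)"
  shows "G \<in> sets (PiM I (\<lambda>_. count_space UNIV))"
proof (rule sets.countable)
  show "countable G"
    using assms by (intro countable_subset[OF assms(2)] countable_PiE) auto
  fix g assume "g \<in> G"
  then have g: "g \<in> PiE I (\<lambda>_. UNIV)" using assms by auto
  have "{g} = PiE I (\<lambda>i. {g i})"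
  proof (intro set_eqI iffI)
    fix x assume x: "x \<in> PiE I (\<lambda>i. {g i})"
    have "x i = g i" for i
      using x g by (cases "i \<in> I") (auto simp: PiE_def Pi_def extensional_def)
    then show "x \<in> {g}" by auto
  qed (use g in auto)
  also have "\<dots> \<in> sets (PiM I (\<lambda>_. count_space UNIV))"
    using assms by (intro sets_PiM_I_finite) auto
  finally show "{g} \<in> sets (PiM I (\<lambda>_. count_space UNIV))" .
qed

lemma distr_restrict_Pi_pmf:
  assumes "finite I" "I \<noteq> {}"
  shows "distr (measure_pmf (Pi_pmf I d (\<lambda>_. q))) (PiM I (\<lambda>_. count_space UNIV)) (\<lambda>f. restrict f I) =
         PiM I (\<lambda>_. measure_pmf q)"
proof -
  have "distr (measure_pmf (Pi_pmf I d (\<lambda>_. q))) (PiM I (\<lambda>_. count_space UNIV)) (\<lambda>f. restrict f I) =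
        PiM I (\<lambda>i. distr (measure_pmf (Pi_pmf I d (\<lambda>_. q))) (count_space UNIV) (\<lambda>f. f i))"
    using prob_space.indep_vars_iff_distr_eq_PiM'[OF measure_pmf.prob_space_axioms[of "Pi_pmf I d (\<lambda>_. q)"],
        where I=I and M'="\<lambda>_. count_space UNIV" and X="\<lambda>i f. f i"]
      indep_vars_Pi_pmf[OF assms(1), of d "\<lambda>_. q"] assms by simp
  also have "\<dots> = PiM I (\<lambda>_. measure_pmf q)"
  proof (rule PiM_cong[OF refl])
    fix i assume "i \<in> I"
    then show "distr (measure_pmf (Pi_pmf I d (\<lambda>_. q))) (count_space UNIV) (\<lambda>f. f i) = measure_pmf q"
      using assms by (simp add: map_pmf_rep_eq[symmetric] Pi_pmf_component)
  qed
  finally show ?thesis .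
qed

definition joint_var :: "(int \<Rightarrow> 'a \<Rightarrow> nat) \<Rightarrow> (int \<Rightarrow> nat \<Rightarrow> 'a \<Rightarrow> int) \<Rightarrow> int + int \<times> nat \<Rightarrow> 'a \<Rightarrow> int" where
  "joint_var N Y j \<omega> = (case j of Inl x \<Rightarrow> int (N x \<omega>) | Inr (x, i) \<Rightarrow> Y x i \<omega>)"

definition joint_index :: "(int + int \<times> nat) set" where
  "joint_index = range Inl \<union> {Inr (x, i) | x i. i \<ge> 1}"

locale poisson_model = prob_space M for M :: "'a measure" +
  fixes N :: "int \<Rightarrow> 'a \<Rightarrow> nat" and Y :: "int \<Rightarrow> nat \<Rightarrow> 'a \<Rightarrow> int" and lam :: real and p :: "int pmf"
  assumes lam_pos: "0 < lam"
    and indep: "indep_vars (\<lambda>_. count_space UNIV) (joint_var N Y) joint_index"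
    and count_distr: "\<And>x m. prob {\<omega> \<in> space M. N x \<omega> = m} = poisson_weight lam m"
    and jump_distr: "\<And>x i k. 1 \<le> i \<Longrightarrow> prob {\<omega> \<in> space M. Y x i \<omega> = k} = pmf p k"
begin

abbreviation "X \<equiv> joint_var N Y"

definition jump_index :: "(int + int \<times> nat) set" where
  "jump_index = Inr ` {(x, i). 1 \<le> i}"

lemma jump_index_subset: "jump_index \<subseteq> joint_index"
  by (auto simp: jump_index_def joint_index_def)

lemma measurable_joint_var: "j \<in> joint_index \<Longrightarrow> X j \<in> measurable M (count_space UNIV)"
  using indep by (auto simp: indep_vars_def)

lemma restrict_joint_var_events:
  assumes "finite I" "I \<subseteq> joint_index" "G \<subseteq> PiE I (\<lambda>_. UNIV)"
  shows "{\<omega> \<in> space M. restrict (\<lambda>j. X j \<omega>) I \<in> G} \<in> events"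
proof -
  have "(\<lambda>\<omega>. restrict (\<lambda>j. X j \<omega>) I) \<in> measurable M (PiM I (\<lambda>_. count_space UNIV))"
    using assms by (intro measurable_restrict measurable_joint_var) auto
  from measurable_sets[OF this countable_set_in_sets_PiM[OF assms(1,3)]] show ?thesis
    by (simp add: vimage_def Int_def conj_commute)
qed

lemma distr_jump:
  assumes "j \<in> jump_index"
  shows "distr M (count_space UNIV) (X j) = measure_pmf p"
proof (rule measure_eqI_countable[where A=UNIV])
  fix a :: int
  from assms obtain x i where j: "j = Inr (x, i)" "1 \<le> i" by (auto simp: jump_index_def)
  have meas: "X j \<in> measurable M (count_space UNIV)"
    using assms jump_index_subset by (intro measurable_joint_var) auto
  have "X j -` {a} \<inter> space M = {\<omega> \<in> space M. Y x i \<omega> = a}" by (auto simp: j joint_var_def)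
  then show "emeasure (distr M (count_space UNIV) (X j)) {a} = emeasure (measure_pmf p) {a}"
    using jump_distr[OF j(2), of x a] meas
    by (simp add: emeasure_distr emeasure_eq_measure emeasure_pmf_single)
qed auto

lemma prob_restrict_jumps:
  assumes "finite I" "I \<subseteq> jump_index" "G \<subseteq> PiE I (\<lambda>_. UNIV)"
  shows "prob {\<omega> \<in> space M. restrict (\<lambda>j. X j \<omega>) I \<in> G} =
         measure_pmf.prob (Pi_pmf I 0 (\<lambda>_. p)) {f. restrict f I \<in> G}"
proof (cases "I = {}")
  case True
  have r1: "restrict (\<lambda>j. X j \<omega>) I = (\<lambda>_. undefined)" for \<omega> using True by auto
  have r2: "restrict f I = (\<lambda>_. undefined)" for f :: "_ \<Rightarrow> int" using True by auto
  show ?thesis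
  proof (cases "(\<lambda>_. undefined) \<in> G")
    case True
    then have "{\<omega> \<in> space M. restrict (\<lambda>j. X j \<omega>) I \<in> G} = space M" "{f. restrict f I \<in> G} = UNIV"
      using r1 r2 by auto
    then show ?thesis by (simp add: prob_space measure_pmf.prob_space)
  next
    case False
    then have "{\<omega> \<in> space M. restrict (\<lambda>j. X j \<omega>) I \<in> G} = {}" "{f. restrict f I \<in> G} = {}"
      using r1 r2 by auto
    then show ?thesis by simp
  qed
next
  case False
  let ?PiM = "PiM I (\<lambda>_. count_space UNIV)"
  have meas: "(\<lambda>\<omega>. restrict (\<lambda>j. X j \<omega>) I) \<in> measurable M ?PiM"
    using assms jump_index_subset by (intro measurable_restrict measurable_joint_var) auto
  have G: "G \<in> sets ?PiM" using assms by (intro countable_set_in_sets_PiM) auto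
  have I: "I \<subseteq> joint_index" using assms(2) jump_index_subset by blast
  have ind: "indep_vars (\<lambda>_. count_space UNIV) X I"
    using indep_vars_subset[OF indep I] .
  have "distr M ?PiM (\<lambda>\<omega>. restrict (\<lambda>j. X j \<omega>) I) = PiM I (\<lambda>i. distr M (count_space UNIV) (X i))"
    using indep_vars_iff_distr_eq_PiM'[where I=I and M'="\<lambda>_. count_space UNIV" and X=X] ind False
      measurable_joint_var I by blast
  also have "\<dots> = PiM I (\<lambda>_. measure_pmf p)"
    using assms by (intro PiM_cong refl distr_jump) auto
  also have "\<dots> = distr (measure_pmf (Pi_pmf I 0 (\<lambda>_. p))) ?PiM (\<lambda>f. restrict f I)"
    using distr_restrict_Pi_pmf[OF assms(1) False, of 0 p] by simp
  finally have "measure (distr M ?PiM (\<lambda>\<omega>. restrict (\<lambda>j. X j \<omega>) I)) G =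
      measure (distr (measure_pmf (Pi_pmf I 0 (\<lambda>_. p))) ?PiM (\<lambda>f. restrict f I)) G"
    by simp
  then show ?thesis
    using meas G assms by (simp add: measure_distr vimage_def Int_def conj_commute space_PiM)
qed

lemma prob_restrict_indep:
  assumes "finite I1" "finite I2" "I1 \<subseteq> joint_index" "I2 \<subseteq> joint_index" "I1 \<inter> I2 = {}"
    "G1 \<subseteq> PiE I1 (\<lambda>_. UNIV)" "G2 \<subseteq> PiE I2 (\<lambda>_. UNIV)"
  shows "prob ({\<omega> \<in> space M. restrict (\<lambda>j. X j \<omega>) I1 \<in> G1} \<inter> {\<omega> \<in> space M. restrict (\<lambda>j. X j \<omega>) I2 \<in> G2}) =
         prob {\<omega> \<in> space M. restrict (\<lambda>j. X j \<omega>) I1 \<in> G1} * prob {\<omega> \<in> space M. restrict (\<lambda>j. X j \<omega>) I2 \<in> G2}"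
proof -
  have "indep_var (PiM I1 (\<lambda>_. count_space UNIV)) (\<lambda>\<omega>. restrict (\<lambda>j. X j \<omega>) I1)
                  (PiM I2 (\<lambda>_. count_space UNIV)) (\<lambda>\<omega>. restrict (\<lambda>j. X j \<omega>) I2)"
    by (rule indep_var_restrict[OF indep]) (use assms in auto)
  from indep_varD[OF this, of G1 G2] assms show ?thesis
    by (simp add: countable_set_in_sets_PiM vimage_def Int_def conj_commute conj_left_commute
        Collect_conj_eq[symmetric])
qed

end

definition window :: "nat \<Rightarrow> int set" where
  "window n = {- int n..int n}"

lemma finite_window [simp]: "finite (window n)"
  by (simp add: window_def)

lemma card_window: "card (window n) = 2 * n + 1"
  by (simp add: window_def)

context poisson_model
begin

definition count_event :: "nat \<Rightarrow> (int \<Rightarrow> nat) \<Rightarrow> 'a set" where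
  "count_event n \<nu> = {\<omega> \<in> space M. \<forall>x\<in>window n. N x \<omega> = \<nu> x}"

definition jump_set :: "nat \<Rightarrow> (int \<Rightarrow> nat) \<Rightarrow> (int + int \<times> nat) set" where
  "jump_set n \<nu> = Inr ` (SIGMA x:window n. {1..\<nu> x})"

definition total_count :: "nat \<Rightarrow> 'a \<Rightarrow> nat" where
  "total_count n \<omega> = (\<Sum>x\<in>window n. N x \<omega>)"

definition compound_sum :: "nat \<Rightarrow> 'a \<Rightarrow> int" where
  "compound_sum n \<omega> = (\<Sum>x\<in>window n. \<Sum>i\<in>{1..N x \<omega>}. Y x i \<omega>)"

definition some_jump_eq :: "nat \<Rightarrow> int \<Rightarrow> 'a \<Rightarrow> bool" where
  "some_jump_eq n k \<omega> = (\<exists>x\<in>window n. \<exists>i\<in>{1..N x \<omega>}. Y x i \<omega> = k)"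

lemma finite_jump_set: "finite (jump_set n \<nu>)"
  by (simp add: jump_set_def)

lemma jump_set_subset: "jump_set n \<nu> \<subseteq> jump_index"
  by (auto simp: jump_set_def jump_index_def)

lemma card_jump_set: "card (jump_set n \<nu>) = (\<Sum>x\<in>window n. \<nu> x)"
  by (simp add: jump_set_def card_image card_SigmaI)

lemma count_event_eq:
  "count_event n \<nu> = {\<omega> \<in> space M. restrict (\<lambda>j. X j \<omega>) (Inl ` window n) \<in>
     {g \<in> PiE (Inl ` window n) (\<lambda>_. UNIV). \<forall>x\<in>window n. g (Inl x) = int (\<nu> x)}}"
  by (auto simp: count_event_def joint_var_def)

lemma space_of_count_event: "\<omega> \<in> count_event n \<nu> \<Longrightarrow> \<omega> \<in> space M"
  by (simp add: count_event_def)

lemma count_event_in_events: "count_event n \<nu> \<in> events"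
  unfolding count_event_eq by (rule restrict_joint_var_events) (auto simp: joint_index_def)

lemma prob_count_event: "prob (count_event n \<nu>) = (\<Prod>x\<in>window n. poisson_weight lam (\<nu> x))"
proof -
  have "count_event n \<nu> = (\<Inter>j\<in>Inl ` window n. X j -` {int (\<nu> (projl j))} \<inter> space M)"
    by (auto simp: count_event_def joint_var_def window_def)
  also have "prob \<dots> = (\<Prod>j\<in>Inl ` window n. prob (X j -` {int (\<nu> (projl j))} \<inter> space M))"
    by (rule indep_varsD[OF indep]) (auto simp: window_def joint_index_def)
  also have "\<dots> = (\<Prod>x\<in>window n. prob (X (Inl x) -` {int (\<nu> x)} \<inter> space M))"
    by (subst prod.reindex) (auto simp: inj_on_def)
  also have "\<dots> = (\<Prod>x\<in>window n. poisson_weight lam (\<nu> x))"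
  proof (intro prod.cong refl)
    fix x
    have "X (Inl x) -` {int (\<nu> x)} \<inter> space M = {\<omega> \<in> space M. N x \<omega> = \<nu> x}" by (auto simp: joint_var_def)
    then show "prob (X (Inl x) -` {int (\<nu> x)} \<inter> space M) = poisson_weight lam (\<nu> x)"
      by (simp add: count_distr)
  qed
  finally show ?thesis .
qed

text \<open>On \<open>count_event n \<nu>\<close> the jumps in the window are exactly those indexed by \<open>jump_set n \<nu>\<close>;
  events determined by these jumps are independent of the counts.\<close>
lemma count_event_Int_jump_event:
  assumes F: "\<And>f g. (\<forall>j\<in>jump_set n \<nu>. f j = g j) \<Longrightarrow> F f = F g"
    and B: "\<And>\<omega>. \<omega> \<in> count_event n \<nu> \<Longrightarrow> \<omega> \<in> B \<longleftrightarrow> F (\<lambda>j. X j \<omega>)"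
  shows "count_event n \<nu> \<inter> B \<in> events"
    and "prob (count_event n \<nu> \<inter> B) =
         prob (count_event n \<nu>) * measure_pmf.prob (Pi_pmf (jump_set n \<nu>) 0 (\<lambda>_. p)) {f. F f}"
proof -
  let ?J = "jump_set n \<nu>"
  let ?G = "{g \<in> PiE ?J (\<lambda>_. UNIV). F g}"
  have F_restrict: "F (restrict f ?J) = F f" for f
    by (rule F) simp
  have eq: "count_event n \<nu> \<inter> B = count_event n \<nu> \<inter> {\<omega> \<in> space M. restrict (\<lambda>j. X j \<omega>) ?J \<in> ?G}"
    using B F_restrict by (auto simp: count_event_def)
  have J: "finite ?J" "?J \<subseteq> joint_index"
    using finite_jump_set jump_set_subset jump_index_subset by blast+
  show "count_event n \<nu> \<inter> B \<in> events"
    unfolding eq by (intro sets.Int count_event_in_events restrict_joint_var_events J) auto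
  have "prob (count_event n \<nu> \<inter> {\<omega> \<in> space M. restrict (\<lambda>j. X j \<omega>) ?J \<in> ?G}) =
        prob (count_event n \<nu>) * prob {\<omega> \<in> space M. restrict (\<lambda>j. X j \<omega>) ?J \<in> ?G}"
    unfolding count_event_eq
    by (rule prob_restrict_indep) (use J in \<open>auto simp: joint_index_def jump_set_def\<close>)
  then have "prob (count_event n \<nu> \<inter> B) =
        prob (count_event n \<nu>) * prob {\<omega> \<in> space M. restrict (\<lambda>j. X j \<omega>) ?J \<in> ?G}"
    unfolding eq .
  also have "prob {\<omega> \<in> space M. restrict (\<lambda>j. X j \<omega>) ?J \<in> ?G} =
             measure_pmf.prob (Pi_pmf ?J 0 (\<lambda>_. p)) {f. restrict f ?J \<in> ?G}"
    by (rule prob_restrict_jumps) (use J jump_set_subset in auto)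
  also have "{f. restrict f ?J \<in> ?G} = {f. F f}"
    using F_restrict by auto
  finally show "prob (count_event n \<nu> \<inter> B) =
      prob (count_event n \<nu>) * measure_pmf.prob (Pi_pmf ?J 0 (\<lambda>_. p)) {f. F f}" .
qed

lemma compound_sum_eq_sum_jump_set:
  assumes "\<omega> \<in> count_event n \<nu>"
  shows "compound_sum n \<omega> = (\<Sum>j\<in>jump_set n \<nu>. X j \<omega>)"
proof -
  have "compound_sum n \<omega> = (\<Sum>x\<in>window n. \<Sum>i\<in>{1..\<nu> x}. Y x i \<omega>)"
    using assms by (simp add: compound_sum_def count_event_def)
  also have "\<dots> = (\<Sum>(x, i)\<in>(SIGMA x:window n. {1..\<nu> x}). Y x i \<omega>)"
    by (rule sum.Sigma) auto
  also have "\<dots> = (\<Sum>j\<in>jump_set n \<nu>. X j \<omega>)"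
    unfolding jump_set_def by (subst sum.reindex) (auto simp: joint_var_def case_prod_unfold)
  finally show ?thesis .
qed

lemma some_jump_eq_iff_jump_set:
  assumes "\<omega> \<in> count_event n \<nu>"
  shows "some_jump_eq n k \<omega> \<longleftrightarrow> (\<exists>j\<in>jump_set n \<nu>. X j \<omega> = k)"
  using assms by (auto simp: some_jump_eq_def count_event_def jump_set_def joint_var_def)

lemma count_event_Int_compound_sum:
  "count_event n \<nu> \<inter> {\<omega> \<in> space M. compound_sum n \<omega> = k} \<in> events"
  "prob (count_event n \<nu> \<inter> {\<omega> \<in> space M. compound_sum n \<omega> = k}) =
   prob (count_event n \<nu>) * measure_pmf.prob (Pi_pmf (jump_set n \<nu>) 0 (\<lambda>_. p)) {f. (\<Sum>j\<in>jump_set n \<nu>. f j) = k}"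
  by (rule count_event_Int_jump_event[where F="\<lambda>f. (\<Sum>j\<in>jump_set n \<nu>. f j) = k"];
      auto simp: compound_sum_eq_sum_jump_set space_of_count_event)+

lemma count_event_Int_some_jump_eq:
  "count_event n \<nu> \<inter> {\<omega> \<in> space M. some_jump_eq n k \<omega>} \<in> events"
  "prob (count_event n \<nu> \<inter> {\<omega> \<in> space M. some_jump_eq n k \<omega>}) =
   prob (count_event n \<nu>) * measure_pmf.prob (Pi_pmf (jump_set n \<nu>) 0 (\<lambda>_. p)) {f. \<exists>j\<in>jump_set n \<nu>. f j = k}"
  by (rule count_event_Int_jump_event[where F="\<lambda>f. \<exists>j\<in>jump_set n \<nu>. f j = k"];
      auto simp: some_jump_eq_iff_jump_set space_of_count_event)+

lemma total_count_Int_eq_UN: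
  assumes "B \<subseteq> space M"
  shows "{\<omega> \<in> space M. total_count n \<omega> = m} \<inter> B = (\<Union>\<nu>\<in>weak_compositions (window n) m. count_event n \<nu> \<inter> B)"
proof (intro set_eqI iffI)
  fix \<omega> assume \<omega>: "\<omega> \<in> {\<omega> \<in> space M. total_count n \<omega> = m} \<inter> B"
  define \<nu> where "\<nu> = restrict (\<lambda>x. N x \<omega>) (window n)"
  have "\<nu> \<in> weak_compositions (window n) m" using \<omega> by (auto simp: \<nu>_def weak_compositions_def total_count_def)
  moreover have "\<omega> \<in> count_event n \<nu> \<inter> B" using \<omega> by (auto simp: \<nu>_def count_event_def)
  ultimately show "\<omega> \<in> (\<Union>\<nu>\<in>weak_compositions (window n) m. count_event n \<nu> \<inter> B)" by auto
next
  fix \<omega> assume "\<omega> \<in> (\<Union>\<nu>\<in>weak_compositions (window n) m. count_event n \<nu> \<inter> B)"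
  then show "\<omega> \<in> {\<omega> \<in> space M. total_count n \<omega> = m} \<inter> B"
    by (auto simp: weak_compositions_def count_event_def total_count_def)
qed

lemma disjoint_family_count_event: "disjoint_family_on (\<lambda>\<nu>. count_event n \<nu> \<inter> B) (weak_compositions (window n) m)"
  unfolding disjoint_family_on_def
proof (intro ballI impI)
  fix \<nu> \<nu>' assume \<nu>: "\<nu> \<in> weak_compositions (window n) m" "\<nu>' \<in> weak_compositions (window n) m" "\<nu> \<noteq> \<nu>'"
  then have "\<exists>x\<in>window n. \<nu> x \<noteq> \<nu>' x"
    using PiE_ext[of \<nu> "window n" "\<lambda>_. UNIV" \<nu>'] by (auto simp: weak_compositions_def)
  then obtain x where "x \<in> window n" "\<nu> x \<noteq> \<nu>' x" by blast
  then show "(count_event n \<nu> \<inter> B) \<inter> (count_event n \<nu>' \<inter> B) = {}" by (auto simp: count_event_def)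
qed

lemma prob_total_count_Int:
  assumes "B \<subseteq> space M" "\<And>\<nu>. count_event n \<nu> \<inter> B \<in> events"
  shows "prob ({\<omega> \<in> space M. total_count n \<omega> = m} \<inter> B) =
         (\<Sum>\<nu>\<in>weak_compositions (window n) m. prob (count_event n \<nu> \<inter> B))"
  unfolding total_count_Int_eq_UN[OF assms(1)]
  by (rule finite_measure_finite_Union) (use assms finite_weak_compositions[OF finite_window] disjoint_family_count_event in auto)

lemma prob_total_count_Int_sums:
  assumes "B \<subseteq> space M" "\<And>\<nu>. count_event n \<nu> \<inter> B \<in> events"
  shows "(\<lambda>m. prob ({\<omega> \<in> space M. total_count n \<omega> = m} \<inter> B)) sums prob B"
proof -
  have "{\<omega> \<in> space M. total_count n \<omega> = m} \<inter> B \<in> events" for m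
    unfolding total_count_Int_eq_UN[OF assms(1)]
    by (intro sets.finite_UN) (use assms finite_weak_compositions[OF finite_window] in auto)
  then have "(\<lambda>m. prob ({\<omega> \<in> space M. total_count n \<omega> = m} \<inter> B)) sums
             prob (\<Union>m. {\<omega> \<in> space M. total_count n \<omega> = m} \<inter> B)"
    by (intro finite_measure_UNION) (auto simp: disjoint_family_on_def)
  moreover have "(\<Union>m. {\<omega> \<in> space M. total_count n \<omega> = m} \<inter> B) = B" using assms(1) by auto
  ultimately show ?thesis by simp
qed

lemma sum_prob_count_event:
  "(\<Sum>\<nu>\<in>weak_compositions (window n) m. prob (count_event n \<nu>)) = poisson_weight ((2 * real n + 1) * lam) m"
proof -
  have "(\<Sum>\<nu>\<in>weak_compositions (window n) m. prob (count_event n \<nu>)) =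
        (\<Sum>\<nu>\<in>weak_compositions (window n) m. \<Prod>x\<in>window n. lam ^ (\<nu> x) / fact (\<nu> x) * exp (- lam))"
    by (simp add: prob_count_event poisson_weight_def)
  also have "\<dots> = (\<Sum>\<nu>\<in>weak_compositions (window n) m.
      (\<Prod>x\<in>window n. lam ^ (\<nu> x) / fact (\<nu> x)) * exp (- lam) ^ card (window n))"
    by (intro sum.cong refl, subst prod.distrib) simp
  also have "\<dots> = (real (card (window n)) * lam) ^ m / fact m * exp (- lam) ^ card (window n)"
    by (simp add: sum_distrib_right[symmetric] sum_weak_compositions_prod_power)
  also have "exp (- lam) ^ card (window n) = exp (- ((2 * real n + 1) * lam))"
    by (simp add: card_window exp_of_nat_mult[symmetric] exp_add[symmetric] algebra_simps)
  finally show ?thesis by (simp add: poisson_weight_def card_window add.commute)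
qed

lemma prob_total_count_some_jump_eq:
  "prob ({\<omega> \<in> space M. total_count n \<omega> = m} \<inter> {\<omega> \<in> space M. some_jump_eq n k \<omega>}) =
   poisson_weight ((2 * real n + 1) * lam) m * (1 - (1 - pmf p k) ^ m)"
proof -
  have "card (jump_set n \<nu>) = m" if "\<nu> \<in> weak_compositions (window n) m" for \<nu>
    using that by (simp add: card_jump_set weak_compositions_def)
  then have "prob ({\<omega> \<in> space M. total_count n \<omega> = m} \<inter> {\<omega> \<in> space M. some_jump_eq n k \<omega>}) =
        (\<Sum>\<nu>\<in>weak_compositions (window n) m. prob (count_event n \<nu>) * (1 - (1 - pmf p k) ^ m))"
    by (simp add: prob_total_count_Int count_event_Int_some_jump_eq prob_Pi_pmf_exists finite_jump_set)
  then show ?thesis by (simp add: sum_distrib_right[symmetric] sum_prob_count_event)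
qed

lemma prob_some_jump_eq:
  "prob {\<omega> \<in> space M. some_jump_eq n k \<omega>} = 1 - exp (- ((2 * real n + 1) * lam) * pmf p k)"
proof -
  let ?\<mu> = "(2 * real n + 1) * lam"
  have "(\<lambda>m. poisson_weight ?\<mu> m * (1 - (1 - pmf p k) ^ m)) sums prob {\<omega> \<in> space M. some_jump_eq n k \<omega>}"
    using prob_total_count_Int_sums[of "{\<omega> \<in> space M. some_jump_eq n k \<omega>}" n]
    by (simp add: prob_total_count_some_jump_eq count_event_Int_some_jump_eq)
  moreover have "(\<lambda>m. poisson_weight ?\<mu> m * (1 - (1 - pmf p k) ^ m)) sums (1 - exp (?\<mu> * ((1 - pmf p k) - 1)))"
    using sums_diff[OF poisson_weight_sums poisson_weight_power_sums[of ?\<mu> "1 - pmf p k"]]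
    by (simp add: algebra_simps)
  ultimately show ?thesis using sums_unique2 by (fastforce simp: algebra_simps)
qed

end

locale power_law_poisson_model = poisson_model M N Y lam p + power_law p \<alpha> Z
  for M :: "'a measure" and N Y lam p \<alpha> Z
begin

lemma prob_total_count_compound_sum_approx:
  assumes k: "0 < k" and L: "0 < L" "2 * L < real_of_int k" and s: "0 < s" and h: "0 \<le> h"
  shows "\<bar>prob ({\<omega> \<in> space M. total_count n \<omega> = m} \<inter> {\<omega> \<in> space M. compound_sum n \<omega> = k})
            - poisson_weight ((2 * real n + 1) * lam) m * (real m * pmf p k)\<bar>
         \<le> poisson_weight ((2 * real n + 1) * lam) m * iid_sum_err k L s h m"
proof -
  let ?V = "weak_compositions (window n) m"
  let ?R = "\<lambda>\<nu>. measure_pmf.prob (iid (jump_set n \<nu>)) {f. (\<Sum>j\<in>jump_set n \<nu>. f j) = k}"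
  have R: "\<bar>?R \<nu> - real m * pmf p k\<bar> \<le> iid_sum_err k L s h m" if "\<nu> \<in> ?V" for \<nu>
  proof -
    have "card (jump_set n \<nu>) = m" using that by (simp add: card_jump_set weak_compositions_def)
    then show ?thesis using prob_iid_sum_approx[OF finite_jump_set k L s h, of n \<nu>] by simp
  qed
  have "prob ({\<omega> \<in> space M. total_count n \<omega> = m} \<inter> {\<omega> \<in> space M. compound_sum n \<omega> = k})
          - poisson_weight ((2 * real n + 1) * lam) m * (real m * pmf p k)
        = (\<Sum>\<nu>\<in>?V. prob (count_event n \<nu>) * (?R \<nu> - real m * pmf p k))"
    by (simp add: prob_total_count_Int count_event_Int_compound_sum iid_def sum_prob_count_event[symmetric]
        sum_distrib_right right_diff_distrib sum_subtractf)
  also have "\<bar>\<dots>\<bar> \<le> (\<Sum>\<nu>\<in>?V. prob (count_event n \<nu>) * iid_sum_err k L s h m)"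
    by (intro order.trans[OF sum_abs] sum_mono) (simp add: abs_mult R mult_left_mono)
  also have "\<dots> = poisson_weight ((2 * real n + 1) * lam) m * iid_sum_err k L s h m"
    by (simp add: sum_prob_count_event sum_distrib_right[symmetric])
  finally show ?thesis .
qed

lemma prob_compound_sum_approx:
  assumes k: "0 < k" and L: "0 < L" "2 * L < real_of_int k" and s: "0 < s" and h: "0 \<le> h"
  shows "\<bar>prob {\<omega> \<in> space M. compound_sum n \<omega> = k} - (2 * real n + 1) * lam * pmf p k\<bar>
         \<le> poisson_iid_sum_err ((2 * real n + 1) * lam) k L s h"
proof -
  let ?\<mu> = "(2 * real n + 1) * lam"
  let ?S = "{\<omega> \<in> space M. compound_sum n \<omega> = k}"
  have diff: "(\<lambda>m. prob ({\<omega> \<in> space M. total_count n \<omega> = m} \<inter> ?S) - poisson_weight ?\<mu> m * (real m * pmf p k))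
        sums (prob ?S - ?\<mu> * pmf p k)"
    using prob_total_count_Int_sums[of ?S n] sums_mult2[OF poisson_weight_mean_sums[of ?\<mu>], of "pmf p k"]
    by (intro sums_diff) (auto simp: count_event_Int_compound_sum mult.assoc)
  have le: "\<bar>prob ({\<omega> \<in> space M. total_count n \<omega> = m} \<inter> ?S) - poisson_weight ?\<mu> m * (real m * pmf p k)\<bar>
      \<le> poisson_weight ?\<mu> m * iid_sum_err k L s h m" for m
    by (rule prob_total_count_compound_sum_approx[OF k L s h])
  show ?thesis
  proof (rule abs_leI)
    show "prob ?S - ?\<mu> * pmf p k \<le> poisson_iid_sum_err ?\<mu> k L s h"
      by (rule sums_le[OF _ diff iid_sum_err_poisson_sums]) (use le in \<open>auto simp: abs_le_iff\<close>)
    show "- (prob ?S - ?\<mu> * pmf p k) \<le> poisson_iid_sum_err ?\<mu> k L s h"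
      by (rule sums_le[OF _ sums_minus[OF diff] iid_sum_err_poisson_sums]) (use le in \<open>auto simp: abs_le_iff\<close>)
  qed
qed

end

section \<open>Choice of parameters\<close>

context power_law
begin

text \<open>\<open>1 + theta\<close> and \<open>kappa\<close> are moment exponents below \<open>\<alpha>\<close>, for the truncated variance and for
  the tail; the final rate is \<open>n powr -(theta / 2)\<close>.\<close>
definition theta :: real where "theta = min (\<alpha> - 1) 1 / 2"
definition rho :: real where "rho = (\<alpha> - 1) / 4"
definition delta :: real where "delta = rho / (2 + \<alpha>)"
definition kappa :: real where "kappa = (1 + \<alpha>) / 2"

lemma theta_pos: "0 < theta" using alpha_gt_1 by (simp add: theta_def)
lemma theta_le: "theta \<le> 1/2" by (simp add: theta_def)
lemma theta_lt: "1 + theta < \<alpha>"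
proof -
  define t where "t = min (\<alpha> - 1) 1"
  have "t \<le> \<alpha> - 1" by (simp add: t_def)
  then have "1 + t / 2 < \<alpha>" using alpha_gt_1 by linarith
  then show ?thesis by (simp add: theta_def t_def)
qed
lemma theta_le_rho: "theta / 2 \<le> 2 * rho" using alpha_gt_1 by (simp add: theta_def rho_def min_def)
lemma rho_pos: "0 < rho" using alpha_gt_1 by (simp add: rho_def)
lemma delta_pos: "0 < delta" using alpha_gt_1 rho_pos by (simp add: delta_def)
lemma delta_le: "delta \<le> 1/4" using alpha_gt_1 by (simp add: delta_def rho_def field_simps)
lemma kappa_pos: "0 < kappa" using alpha_gt_1 by (simp add: kappa_def)
lemma kappa_lt: "kappa < \<alpha>" using alpha_gt_1 by (simp add: kappa_def)
lemma kappa_eq: "kappa = 1 + 2 * rho" by (simp add: kappa_def rho_def field_simps)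

lemma trunc_var_le_theta: "0 < L \<Longrightarrow> trunc_var L \<le> L powr (1 - theta) * abs_moment (1 + theta)"
  by (rule trunc_var_le) (use theta_pos theta_le theta_lt in auto)

lemma tail_le_kappa: "0 < L \<Longrightarrow> tail L \<le> abs_moment kappa * L powr (- kappa)"
  using tail_le_abs_moment[of L kappa] kappa_pos kappa_lt by (simp add: powr_minus divide_inverse)

text \<open>The truncation level \<open>delta K\<close> and tilt \<open>rho ln K / (delta K)\<close> for a target value \<open>K\<close>: then
  \<open>exp (- tilt K * K) = K powr -(2+\<alpha>)\<close> beats \<open>pmf p K \<approx> K powr -(1+\<alpha>)\<close> by a factor \<open>1 / K\<close>,
  while \<open>exp (tilt K * trunc_level K) = K powr rho\<close> is small enough to keep the tilted mean bounded.\<close>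
definition trunc_level :: "real \<Rightarrow> real" where "trunc_level K = delta * K"
definition tilt :: "real \<Rightarrow> real" where "tilt K = rho * ln K / (delta * K)"

lemma tilt_mult_trunc_level: "0 < K \<Longrightarrow> tilt K * trunc_level K = rho * ln K"
  using delta_pos by (simp add: tilt_def trunc_level_def)

lemma mgf_variance_term_le:
  assumes K: "1 < K" and \<mu>: "0 \<le> \<mu>" "\<mu> \<le> a * K" and a: "0 \<le> a"
  shows "\<mu> * (tilt K^2 * (trunc_level K powr (1 - theta) * abs_moment (1 + theta))) \<le>
         a * rho^2 * abs_moment (1 + theta) * delta powr (-1 - theta) * (2 / theta)^2"
proof -
  let ?m = "abs_moment (1 + theta)"
  have m: "0 \<le> ?m" by (rule abs_moment_nonneg)
  have lnK: "0 < ln K" using K by simp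
  have "tilt K^2 * trunc_level K powr (1 - theta) = (rho * ln K)^2 * (trunc_level K powr (1 - theta) / trunc_level K powr 2)"
    using K delta_pos by (simp add: tilt_def trunc_level_def power2_eq_square powr_numeral)
  also have "trunc_level K powr (1 - theta) / trunc_level K powr 2 = trunc_level K powr (-1 - theta)"
    using powr_diff[of "trunc_level K" "1 - theta" 2] by simp
  also have "\<dots> = delta powr (-1 - theta) * K powr (-1 - theta)"
    using K delta_pos by (simp add: trunc_level_def powr_mult)
  finally have e1: "tilt K^2 * trunc_level K powr (1 - theta) = (rho * ln K)^2 * (delta powr (-1 - theta) * K powr (-1 - theta))" .
  have "ln K ^ 2 = ln K powr 2" using lnK by (simp add: powr_numeral)
  also have "\<dots> \<le> (2 / theta) powr 2 * K powr theta"
    using K theta_pos by (intro ln_powr_le_powr) auto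
  finally have ln_le: "ln K ^ 2 * K powr (- theta) \<le> (2 / theta)^2"
    using K theta_pos by (simp add: powr_numeral powr_minus field_simps)
  have "\<mu> * (tilt K^2 * (trunc_level K powr (1 - theta) * ?m)) \<le> (a * K) * (tilt K^2 * (trunc_level K powr (1 - theta) * ?m))"
    using \<mu> m by (intro mult_right_mono) auto
  also have "\<dots> = a * rho^2 * ?m * delta powr (-1 - theta) * (ln K ^ 2 * (K * K powr (-1 - theta)))"
    using e1 by (simp add: algebra_simps power_mult_distrib)
  also have "K * K powr (-1 - theta) = K powr (- theta)"
    using K powr_add[of K 1 "-1 - theta"] by simp
  also have "a * rho^2 * ?m * delta powr (-1 - theta) * (ln K ^ 2 * K powr (- theta)) \<le>
             a * rho^2 * ?m * delta powr (-1 - theta) * (2 / theta)^2"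
    using a m ln_le by (intro mult_left_mono) auto
  finally show ?thesis .
qed

lemma mgf_tail_term_le:
  assumes K: "1 < K" and \<mu>: "0 \<le> \<mu>" "\<mu> \<le> a * K" and a: "0 \<le> a"
  shows "\<mu> * (K powr rho * (abs_moment kappa * (1 / tilt K) powr (- kappa))) \<le>
         a * abs_moment kappa * rho powr kappa * delta powr (- kappa) * (kappa / rho) powr kappa"
proof -
  let ?m = "abs_moment kappa"
  have m: "0 \<le> ?m" by (rule abs_moment_nonneg)
  have lnK: "0 < ln K" using K by simp
  have "(1 / tilt K) powr (- kappa) = tilt K powr kappa"
    using K delta_pos rho_pos by (simp add: tilt_def powr_minus_divide powr_divide)
  also have "\<dots> = (rho * ln K) powr kappa / (delta * K) powr kappa"
    using K delta_pos rho_pos lnK by (simp add: tilt_def powr_divide)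
  also have "\<dots> = rho powr kappa * ln K powr kappa * delta powr (- kappa) * K powr (- kappa)"
    using K delta_pos rho_pos lnK by (simp add: powr_mult powr_minus divide_inverse)
  finally have e2: "(1 / tilt K) powr (- kappa) = rho powr kappa * ln K powr kappa * delta powr (- kappa) * K powr (- kappa)" .
  have ln_le: "ln K powr kappa * K powr (- rho) \<le> (kappa / rho) powr kappa"
    using ln_powr_le_powr[of K kappa rho] K kappa_pos rho_pos by (simp add: powr_minus field_simps)
  have "\<mu> * (K powr rho * (?m * (1 / tilt K) powr (- kappa))) \<le> (a * K) * (K powr rho * (?m * (1 / tilt K) powr (- kappa)))"
    using \<mu> m by (intro mult_right_mono) auto
  also have "\<dots> = a * ?m * rho powr kappa * delta powr (- kappa) * (ln K powr kappa * (K * K powr rho * K powr (- kappa)))"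
    unfolding e2 by (simp add: algebra_simps)
  also have "K * K powr rho * K powr (- kappa) = K powr (1 + rho - kappa)"
    using K by (simp add: powr_add powr_diff powr_minus field_simps)
  also have "1 + rho - kappa = - rho" by (simp add: kappa_eq)
  also have "a * ?m * rho powr kappa * delta powr (- kappa) * (ln K powr kappa * K powr (- rho)) \<le>
             a * ?m * rho powr kappa * delta powr (- kappa) * (kappa / rho) powr kappa"
    using a m ln_le by (intro mult_left_mono) auto
  finally show ?thesis .
qed

definition mgf_excess_const :: "real \<Rightarrow> real" where
  "mgf_excess_const a =
     a * rho^2 * abs_moment (1 + theta) * delta powr (-1 - theta) * (2 / theta)^2
     + a * abs_moment kappa * rho powr kappa * delta powr (- kappa) * (kappa / rho) powr kappa"

lemma mgf_trunc_excess_le: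
  assumes K: "1 < K" and \<mu>: "0 \<le> \<mu>" "\<mu> \<le> a * K" and a: "0 \<le> a"
  shows "\<mu> * (mgf_trunc (tilt K) (trunc_level K) - 1) \<le> mgf_excess_const a"
proof -
  have L: "0 < trunc_level K" using K delta_pos by (simp add: trunc_level_def)
  have h: "0 < tilt K" using K delta_pos rho_pos by (simp add: tilt_def)
  have "exp (tilt K * trunc_level K) = K powr rho"
    using K by (simp add: tilt_mult_trunc_level powr_def)
  then have "exp (tilt K * trunc_level K) * tail (1 / tilt K) \<le>
      K powr rho * (abs_moment kappa * (1 / tilt K) powr (- kappa))"
    using tail_le_kappa[of "1 / tilt K"] h by (simp add: mult_left_mono)
  moreover have "tilt K^2 * trunc_var (trunc_level K) \<le>
      tilt K^2 * (trunc_level K powr (1 - theta) * abs_moment (1 + theta))"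
    using trunc_var_le_theta[OF L] by (simp add: mult_left_mono)
  ultimately have "mgf_trunc (tilt K) (trunc_level K) - 1 \<le>
      tilt K^2 * (trunc_level K powr (1 - theta) * abs_moment (1 + theta)) +
      K powr rho * (abs_moment kappa * (1 / tilt K) powr (- kappa))"
    using mgf_trunc_le[OF h L] by linarith
  then have "\<mu> * (mgf_trunc (tilt K) (trunc_level K) - 1) \<le>
      \<mu> * (tilt K^2 * (trunc_level K powr (1 - theta) * abs_moment (1 + theta))) +
      \<mu> * (K powr rho * (abs_moment kappa * (1 / tilt K) powr (- kappa)))"
    using \<mu> by (simp add: distrib_left[symmetric] mult_left_mono)
  also have "\<dots> \<le> mgf_excess_const a"
    unfolding mgf_excess_const_def using mgf_variance_term_le[OF assms] mgf_tail_term_le[OF assms]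
    by (rule add_mono)
  finally show ?thesis .
qed

definition amgm_scale :: "real \<Rightarrow> real" where "amgm_scale K = K powr (1 - theta / 2)"

definition chernoff_coeff :: "real \<Rightarrow> real \<Rightarrow> real" where
  "chernoff_coeff l a = exp (mgf_excess_const a) * (2 * Z) / l"

definition two_jumps_coeff :: "real \<Rightarrow> real \<Rightarrow> real" where
  "two_jumps_coeff l a = 2 * delta powr (-(1+\<alpha>)) * abs_moment kappa * delta powr (- kappa) * (1 + 1 / l) * a"

definition fluct_coeff :: "real \<Rightarrow> real \<Rightarrow> real" where
  "fluct_coeff l a = smooth_const 1 delta / 2 * (abs_moment (1 + theta) * (1 + 1 / l) * a + 1)"

definition rel_err :: "real \<Rightarrow> real \<Rightarrow> real \<Rightarrow> real" where
  "rel_err l a K = chernoff_coeff l a * K powr (-1) + two_jumps_coeff l a * K powr (- (2 * rho))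
     + fluct_coeff l a * K powr (- (theta / 2))"

lemma chernoff_term_le:
  assumes K: "1 < real_of_int k" and l: "0 < l" and \<mu>: "l \<le> \<mu>" "\<mu> \<le> a * real_of_int k" and a: "0 \<le> a"
  shows "exp (- tilt (real_of_int k) * real_of_int k) * exp (\<mu> * (mgf_trunc (tilt (real_of_int k)) (trunc_level (real_of_int k)) - 1))
         \<le> \<mu> * pmf p k * (chernoff_coeff l a * real_of_int k powr (-1))"
proof -
  define K where "K = real_of_int k"
  have Kp: "0 < K" using K by (simp add: K_def)
  have pk: "K powr (-(1+\<alpha>)) = pmf p k * (2 * Z)" using Kp Z_pos by (simp add: pmf_pos_eq K_def)
  have "tilt K * K = (2 + \<alpha>) * ln K" using Kp delta_pos rho_pos alpha_gt_1 by (simp add: tilt_def delta_def field_simps)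
  then have e1: "exp (- tilt K * K) = K powr (-1) * K powr (-(1+\<alpha>))"
    using Kp by (simp add: powr_def exp_add[symmetric] algebra_simps)
  have "exp (\<mu> * (mgf_trunc (tilt K) (trunc_level K) - 1)) \<le> exp (mgf_excess_const a)"
    using mgf_trunc_excess_le[of K \<mu> a] K \<mu> l a by (simp add: K_def)
  then have "exp (- tilt K * K) * exp (\<mu> * (mgf_trunc (tilt K) (trunc_level K) - 1)) \<le>
      K powr (-1) * K powr (-(1+\<alpha>)) * exp (mgf_excess_const a)"
    unfolding e1 by (intro mult_left_mono) auto
  also have "\<dots> = l * pmf p k * (chernoff_coeff l a * K powr (-1))"
    using l unfolding pk by (simp add: chernoff_coeff_def field_simps)
  also have "\<dots> \<le> \<mu> * pmf p k * (chernoff_coeff l a * K powr (-1))"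
    using \<mu> l Z_pos by (intro mult_right_mono) (auto simp: chernoff_coeff_def)
  finally show ?thesis by (simp add: K_def)
qed

lemma two_jumps_term_le:
  assumes K: "1 < real_of_int k" and l: "0 < l" and \<mu>: "l \<le> \<mu>" "\<mu> \<le> a * real_of_int k" and a: "0 \<le> a"
  shows "2 * pmf_bound (trunc_level (real_of_int k)) * tail (trunc_level (real_of_int k)) * (\<mu>^2 + \<mu>)
         \<le> \<mu> * pmf p k * (two_jumps_coeff l a * real_of_int k powr (- (2 * rho)))"
proof -
  define K where "K = real_of_int k"
  define L where "L = trunc_level K"
  have Kp: "0 < K" using K by (simp add: K_def)
  have Lp: "0 < L" using Kp delta_pos by (simp add: L_def trunc_level_def)
  have "pmf_bound L = (real_of_int k / L) powr (1+\<alpha>) * pmf p k"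
    using Kp by (intro pmf_bound_eq Lp) (simp add: K_def)
  also have "real_of_int k / L = 1 / delta" using Kp delta_pos by (simp add: L_def K_def trunc_level_def)
  also have "(1 / delta) powr (1+\<alpha>) = delta powr (-(1+\<alpha>))"
    using delta_pos by (subst powr_minus_divide) (simp add: powr_divide)
  finally have pb: "pmf_bound L = delta powr (-(1+\<alpha>)) * pmf p k" .
  have tl: "tail L \<le> abs_moment kappa * delta powr (- kappa) * K powr (- kappa)"
    using tail_le_kappa[OF Lp] delta_pos Kp by (simp add: L_def trunc_level_def powr_mult)
  have "2 * pmf_bound L * tail L * (\<mu>^2 + \<mu>) \<le>
        2 * pmf_bound L * (abs_moment kappa * delta powr (- kappa) * K powr (- kappa)) * (\<mu> * ((1 + 1 / l) * a * K))"
    using tl sq_plus_le_mult[OF l \<mu>[unfolded K_def[symmetric]]] pmf_bound_nonneg[of L] tail_nonneg[of L] l \<mu>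
    by (intro mult_mono mult_left_mono) (auto intro!: mult_nonneg_nonneg)
  also have "\<dots> = \<mu> * pmf p k * (two_jumps_coeff l a * (K powr (- kappa) * K))"
    unfolding pb two_jumps_coeff_def by (simp add: algebra_simps)
  also have "K powr (- kappa) * K = K powr (- (2 * rho))"
    using Kp powr_add[of K "- kappa" 1] by (simp add: kappa_eq)
  finally show ?thesis by (simp add: K_def L_def)
qed

lemma fluct_term_le:
  assumes K: "1 < real_of_int k" and l: "0 < l" and \<mu>: "l \<le> \<mu>" "\<mu> \<le> a * real_of_int k" and a: "0 \<le> a"
  shows "smooth_const k (trunc_level (real_of_int k)) * pmf p k / (2 * real_of_int k) *
           (trunc_var (trunc_level (real_of_int k)) / amgm_scale (real_of_int k) * (\<mu>^2 + \<mu>)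
            + amgm_scale (real_of_int k) * \<mu>)
         \<le> \<mu> * pmf p k * (fluct_coeff l a * real_of_int k powr (- (theta / 2)))"
proof -
  define K where "K = real_of_int k"
  define L where "L = trunc_level K"
  define s where "s = amgm_scale K"
  let ?m = "abs_moment (1 + theta)"
  have Kp: "0 < K" using K by (simp add: K_def)
  have Lp: "0 < L" using Kp delta_pos by (simp add: L_def trunc_level_def)
  have sp: "0 < s" using Kp by (simp add: s_def amgm_scale_def)
  have \<mu>0: "0 < \<mu>" using l \<mu> by linarith
  have kc: "smooth_const k L = smooth_const 1 delta"
    using Kp delta_pos by (simp add: smooth_const_def L_def K_def trunc_level_def)
  have var: "trunc_var L \<le> K powr (1 - theta) * ?m"
  proof -
    have "L powr (1 - theta) \<le> K powr (1 - theta)"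
      using Lp delta_le theta_le Kp by (intro powr_mono2) (auto simp: L_def trunc_level_def)
    then show ?thesis
      using trunc_var_le_theta[OF Lp] abs_moment_nonneg[of "1 + theta"] by (meson mult_right_mono order.trans)
  qed
  have "trunc_var L / s * (\<mu>^2 + \<mu>) \<le> K powr (1 - theta) * ?m / s * (\<mu> * ((1 + 1 / l) * a * K))"
    using var sq_plus_le_mult[OF l \<mu>[unfolded K_def[symmetric]]] sp trunc_var_nonneg[of L] \<mu>0
    by (intro mult_mono divide_right_mono) (auto intro!: mult_nonneg_nonneg)
  also have "\<dots> = ?m * (1 + 1 / l) * a * \<mu> * (K powr (1 - theta) * K / s)"
    using sp l by (simp add: field_simps)
  also have "K powr (1 - theta) * K / s = K powr (1 - theta / 2)"
    using Kp powr_add[of K "1 - theta" 1] powr_diff[of K "2 - theta" "1 - theta / 2"]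
    by (simp add: s_def amgm_scale_def algebra_simps)
  finally have "trunc_var L / s * (\<mu>^2 + \<mu>) + s * \<mu> \<le> \<mu> * K powr (1 - theta / 2) * (?m * (1 + 1 / l) * a + 1)"
    by (simp add: s_def amgm_scale_def algebra_simps)
  then have "smooth_const k L * pmf p k / (2 * K) * (trunc_var L / s * (\<mu>^2 + \<mu>) + s * \<mu>) \<le>
        smooth_const 1 delta * pmf p k / (2 * K) * (\<mu> * K powr (1 - theta / 2) * (?m * (1 + 1 / l) * a + 1))"
    unfolding kc using smooth_const_nonneg Kp by (intro mult_left_mono) auto
  also have "\<dots> = \<mu> * pmf p k * (fluct_coeff l a * (K powr (1 - theta / 2) / K))"
    by (simp add: fluct_coeff_def field_simps)
  also have "K powr (1 - theta / 2) / K = K powr (- (theta / 2))"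
    using Kp powr_diff[of K "1 - theta / 2" 1] by simp
  finally show ?thesis by (simp add: K_def L_def s_def)
qed

lemma poisson_iid_sum_err_le:
  assumes "1 < real_of_int k" "0 < l" "l \<le> \<mu>" "\<mu> \<le> a * real_of_int k" "0 \<le> a"
  shows "poisson_iid_sum_err \<mu> k (trunc_level (real_of_int k)) (amgm_scale (real_of_int k)) (tilt (real_of_int k))
         \<le> \<mu> * pmf p k * rel_err l a (real_of_int k)"
  using chernoff_term_le[OF assms] two_jumps_term_le[OF assms] fluct_term_le[OF assms]
  unfolding poisson_iid_sum_err_def rel_err_def by (simp add: distrib_left)

lemma rel_err_coeffs_nonneg:
  assumes "0 < l" "0 \<le> a"
  shows "0 \<le> chernoff_coeff l a" "0 \<le> two_jumps_coeff l a" "0 \<le> fluct_coeff l a"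
  using assms Z_pos abs_moment_nonneg smooth_const_nonneg
  by (simp_all add: chernoff_coeff_def two_jumps_coeff_def fluct_coeff_def)

lemma rel_err_nonneg: "0 < l \<Longrightarrow> 0 \<le> a \<Longrightarrow> 0 \<le> rel_err l a K"
  using rel_err_coeffs_nonneg[of l a] by (simp add: rel_err_def)

lemma rel_err_le_powr:
  assumes "c * n \<le> K" "1 \<le> n" "0 < c" "0 < l" "0 \<le> a"
  shows "rel_err l a K \<le> rel_err l a c * n powr (- (theta / 2))"
proof -
  have powr_le: "K powr (- e) \<le> c powr (- e) * n powr (- (theta / 2))" if "theta / 2 \<le> e" for e
    using assms that theta_pos by (intro powr_minus_le_of_ge_mult) auto
  have "K powr (-1) \<le> c powr (-1) * n powr (- (theta / 2))"
    by (rule powr_le) (use theta_le in linarith)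
  moreover have "K powr (- (2 * rho)) \<le> c powr (- (2 * rho)) * n powr (- (theta / 2))"
    by (rule powr_le) (rule theta_le_rho)
  moreover have "K powr (- (theta / 2)) \<le> c powr (- (theta / 2)) * n powr (- (theta / 2))"
    by (rule powr_le) simp
  ultimately show ?thesis
    unfolding rel_err_def distrib_right mult.assoc
    using rel_err_coeffs_nonneg[OF assms(4,5)] by (intro add_mono mult_left_mono)
qed

lemma mult_pmf_le:
  assumes "1 \<le> real_of_int k" "0 \<le> \<mu>" "\<mu> \<le> a * real_of_int k"
  shows "\<mu> * pmf p k \<le> a / (2 * Z) * real_of_int k powr (-1)"
proof -
  define K where "K = real_of_int k"
  have K: "1 \<le> K" using assms by (simp add: K_def)
  have "\<mu> * pmf p k \<le> a * K * pmf p k"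
    using assms by (intro mult_right_mono) (auto simp: K_def)
  also have "\<dots> = a / (2 * Z) * (K * K powr (-(1+\<alpha>)))"
    using assms by (simp add: pmf_pos_eq K_def)
  also have "K * K powr (-(1+\<alpha>)) = K powr (- \<alpha>)"
    using K powr_add[of K 1 "-(1+\<alpha>)"] by simp
  also have "a / (2 * Z) * K powr (- \<alpha>) \<le> a / (2 * Z) * K powr (-1)"
    using K alpha_gt_1 Z_pos order.trans[OF assms(2,3)]
    by (intro mult_left_mono powr_mono) (auto simp: K_def zero_le_mult_iff)
  finally show ?thesis by (simp add: K_def)
qed

lemma mult_pmf_le_half:
  assumes "2 \<le> real_of_int k" "a / Z \<le> real_of_int k" "0 \<le> \<mu>" "\<mu> \<le> a * real_of_int k"
  shows "\<mu> * pmf p k \<le> 1 / 2"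
proof -
  have "\<mu> * pmf p k \<le> a / (2 * Z) * real_of_int k powr (-1)"
    using assms by (intro mult_pmf_le) auto
  also have "\<dots> = (a / Z) / real_of_int k / 2"
    using assms by (simp add: powr_minus_divide)
  also have "\<dots> \<le> 1 / 2"
  proof -
    have "(a / Z) / real_of_int k \<le> 1" using assms by (subst divide_le_eq_1_pos) auto
    then show ?thesis by (intro divide_right_mono) auto
  qed
  finally show ?thesis .
qed

end

section \<open>Comparison of the two probabilities\<close>

context power_law_poisson_model
begin

lemma prob_compound_sum_rel_approx:
  assumes "1 < real_of_int k" "(2 * real n + 1) * lam \<le> a * real_of_int k" "0 \<le> a"
  shows "\<bar>prob {\<omega> \<in> space M. compound_sum n \<omega> = k} - (2 * real n + 1) * lam * pmf p k\<bar>
         \<le> (2 * real n + 1) * lam * pmf p k * rel_err lam a (real_of_int k)"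
proof -
  let ?K = "real_of_int k"
  have "\<bar>prob {\<omega> \<in> space M. compound_sum n \<omega> = k} - (2 * real n + 1) * lam * pmf p k\<bar>
        \<le> poisson_iid_sum_err ((2 * real n + 1) * lam) k (trunc_level ?K) (amgm_scale ?K) (tilt ?K)"
    using assms delta_pos delta_le rho_pos
    by (intro prob_compound_sum_approx) (auto simp: trunc_level_def amgm_scale_def tilt_def)
  also have "\<dots> \<le> (2 * real n + 1) * lam * pmf p k * rel_err lam a ?K"
    using assms lam_pos by (intro poisson_iid_sum_err_le) auto
  finally show ?thesis .
qed

lemma abs_prob_some_jump_eq_diff_le:
  assumes "(2 * real n + 1) * lam * pmf p k \<le> 1"
  shows "\<bar>prob {\<omega> \<in> space M. some_jump_eq n k \<omega>} - (2 * real n + 1) * lam * pmf p k\<bar>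
         \<le> ((2 * real n + 1) * lam * pmf p k)^2"
proof -
  have "exp (- ((2 * real n + 1) * lam) * pmf p k) = exp (- ((2 * real n + 1) * lam * pmf p k))" by simp
  then show ?thesis
    unfolding prob_some_jump_eq using assms lam_pos by (simp only:) (intro abs_one_minus_exp_minus_le; simp)
qed

lemma abs_prob_compound_sum_diff_le:
  assumes "1 < real_of_int k" "(2 * real n + 1) * lam \<le> a * real_of_int k" "0 \<le> a"
    and x: "(2 * real n + 1) * lam * pmf p k \<le> 1 / 2"
  shows "\<bar>prob {\<omega> \<in> space M. compound_sum n \<omega> = k} - prob {\<omega> \<in> space M. some_jump_eq n k \<omega>}\<bar>
         \<le> 2 * (rel_err lam a (real_of_int k) + (2 * real n + 1) * lam * pmf p k)
           * prob {\<omega> \<in> space M. some_jump_eq n k \<omega>}"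
proof -
  define x where "x = (2 * real n + 1) * lam * pmf p k"
  define r where "r = rel_err lam a (real_of_int k)"
  have x0: "0 \<le> x" using lam_pos by (simp add: x_def)
  have r0: "0 \<le> r" using lam_pos assms by (simp add: r_def rel_err_nonneg)
  have S: "\<bar>prob {\<omega> \<in> space M. compound_sum n \<omega> = k} - x\<bar> \<le> x * r"
    using prob_compound_sum_rel_approx[OF assms(1-3)] by (simp add: x_def r_def)
  have E: "\<bar>prob {\<omega> \<in> space M. some_jump_eq n k \<omega>} - x\<bar> \<le> x * x"
    using abs_prob_some_jump_eq_diff_le[of n k] x by (simp add: x_def power2_eq_square)
  have "x * x \<le> x / 2" using x x0 mult_left_mono[of x "1/2" x] by (simp add: x_def)
  then have x_le: "x \<le> 2 * prob {\<omega> \<in> space M. some_jump_eq n k \<omega>}" using E by (simp add: abs_le_iff)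
  have "\<bar>prob {\<omega> \<in> space M. compound_sum n \<omega> = k} - prob {\<omega> \<in> space M. some_jump_eq n k \<omega>}\<bar>
        \<le> \<bar>prob {\<omega> \<in> space M. compound_sum n \<omega> = k} - x\<bar> + \<bar>prob {\<omega> \<in> space M. some_jump_eq n k \<omega>} - x\<bar>"
    by linarith
  also have "\<dots> \<le> x * (r + x)"
    using S E by (simp add: distrib_left)
  also have "\<dots> \<le> 2 * prob {\<omega> \<in> space M. some_jump_eq n k \<omega>} * (r + x)"
    using x_le r0 x0 by (intro mult_right_mono) auto
  also have "\<dots> = 2 * (r + x) * prob {\<omega> \<in> space M. some_jump_eq n k \<omega>}"
    by (simp only: mult_ac)
  finally show ?thesis unfolding x_def r_def .
qed

lemma prob_compound_sum_vs_some_jump_eq: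
  assumes c: "0 < c"
  shows "\<exists>C n0. \<forall>(n::nat) (k::int). n0 \<le> n \<longrightarrow> c * real n \<le> real_of_int k \<longrightarrow>
     \<bar>prob {\<omega> \<in> space M. compound_sum n \<omega> = k} - prob {\<omega> \<in> space M. some_jump_eq n k \<omega>}\<bar>
       \<le> C * real n powr (- (theta / 2)) * prob {\<omega> \<in> space M. some_jump_eq n k \<omega>}"
proof -
  define a where "a = 3 * lam / c"
  define C where "C = 2 * (rel_err lam a c + a / (2 * Z) * c powr (-1))"
  define n0 where "n0 = nat \<lceil>max 2 (a / Z) / c\<rceil> + 1"
  have a: "0 \<le> a" using lam_pos c by (simp add: a_def)
  show ?thesis
  proof (intro exI allI impI)
    fix n :: nat and k :: int
    assume n: "n0 \<le> n" and k: "c * real n \<le> real_of_int k"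
    define x where "x = (2 * real n + 1) * lam * pmf p k"
    have n1: "1 \<le> real n" using n by (simp add: n0_def)
    have "max 2 (a / Z) / c \<le> real n" using n unfolding n0_def by linarith
    then have "max 2 (a / Z) \<le> c * real n" using c by (simp add: pos_divide_le_eq mult.commute)
    then have K: "2 \<le> real_of_int k" "a / Z \<le> real_of_int k" using k by auto
    have "(2 * real n + 1) * lam \<le> (3 * real n) * lam"
      using n1 lam_pos by (intro mult_right_mono) auto
    also have "\<dots> = a * (c * real n)" using c by (simp add: a_def)
    also have "\<dots> \<le> a * real_of_int k" using k a by (rule mult_left_mono)
    finally have \<mu>: "(2 * real n + 1) * lam \<le> a * real_of_int k" .
    have "x \<le> a / (2 * Z) * real_of_int k powr (-1)"
      unfolding x_def using K \<mu> lam_pos by (intro mult_pmf_le) auto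
    also have "\<dots> \<le> a / (2 * Z) * (c powr (-1) * real n powr (- (theta / 2)))"
      using k n1 c a Z_pos theta_pos theta_le by (intro mult_left_mono powr_minus_le_of_ge_mult) auto
    finally have x_powr: "x \<le> a / (2 * Z) * c powr (-1) * real n powr (- (theta / 2))" by simp
    have "x \<le> 1 / 2"
      unfolding x_def using K \<mu> lam_pos by (intro mult_pmf_le_half) auto
    then have "\<bar>prob {\<omega> \<in> space M. compound_sum n \<omega> = k} - prob {\<omega> \<in> space M. some_jump_eq n k \<omega>}\<bar>
        \<le> 2 * (rel_err lam a (real_of_int k) + x) * prob {\<omega> \<in> space M. some_jump_eq n k \<omega>}"
      using abs_prob_compound_sum_diff_le[of k n a] K \<mu> a by (simp add: x_def)
    also have "\<dots> \<le> C * real n powr (- (theta / 2)) * prob {\<omega> \<in> space M. some_jump_eq n k \<omega>}"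
      using rel_err_le_powr[OF k n1 c lam_pos a] x_powr
      by (intro mult_right_mono) (auto simp: C_def algebra_simps)
    finally show "\<bar>prob {\<omega> \<in> space M. compound_sum n \<omega> = k} - prob {\<omega> \<in> space M. some_jump_eq n k \<omega>}\<bar>
        \<le> C * real n powr (- (theta / 2)) * prob {\<omega> \<in> space M. some_jump_eq n k \<omega>}" .
  qed
qed

end

lemma ex_power_law_poisson_model:
  fixes N :: "int \<Rightarrow> 'a \<Rightarrow> nat" and Y :: "int \<Rightarrow> nat \<Rightarrow> 'a \<Rightarrow> int"
  assumes "1 < \<alpha>" "0 < lam" "prob_space M"
    and indep: "prob_space.indep_vars M (\<lambda>_. count_space UNIV)
        (\<lambda>j \<omega>. case j of Inl x \<Rightarrow> int (N x \<omega>) | Inr (x, i) \<Rightarrow> Y x i \<omega>)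
        (range Inl \<union> {Inr (x, i) | x i. i \<ge> 1})"
    and "\<forall>x (m::nat). measure M {\<omega> \<in> space M. N x \<omega> = m} = lam ^ m / fact m * exp (- lam)"
    and jump: "\<forall>x i (k::int). i \<ge> 1 \<longrightarrow> measure M {\<omega> \<in> space M. Y x i \<omega> = k} =
        (if k = 0 then 0 else \<bar>real_of_int k\<bar> powr (-(1 + \<alpha>)) / (2 * zeta_real (1 + \<alpha>)))"
  shows "\<exists>p. power_law_poisson_model M N Y lam p \<alpha> (zeta_real (1 + \<alpha>))"
proof -
  interpret prob_space M by fact
  have indep': "indep_vars (\<lambda>_. count_space UNIV) (joint_var N Y) joint_index"
    using indep unfolding joint_var_def[abs_def] joint_index_def .
  then have "joint_var N Y (Inr (0, 1)) \<in> measurable M (count_space UNIV)"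
    by (auto simp: indep_vars_def joint_index_def)
  moreover have "joint_var N Y (Inr (0, 1)) = Y 0 1" by (simp add: joint_var_def fun_eq_iff)
  ultimately obtain p where p: "\<And>k. pmf p k = prob {\<omega> \<in> space M. Y 0 1 \<omega> = k}"
    using ex_pmf_eq_prob[of "Y 0 1"] by auto
  have "poisson_model M N Y lam p"
    using assms indep' jump by unfold_locales (auto simp: poisson_weight_def p)
  moreover have "power_law p \<alpha> (zeta_real (1 + \<alpha>))"
    using assms zeta_real_pos[of "1 + \<alpha>"] by unfold_locales (auto simp: p)
  ultimately show ?thesis
    by (blast intro: power_law_poisson_model.intro)
qed

theorem proposition1:
  fixes \<alpha> :: real
  assumes "\<alpha> > 1"
  shows "\<exists>\<beta>>0. \<forall>(lam::real) (M :: 'a measure) (N :: int \<Rightarrow> 'a \<Rightarrow> nat) (Y :: int \<Rightarrow> nat \<Rightarrow> 'a \<Rightarrow> int).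
     lam > 0 \<longrightarrow> prob_space M \<longrightarrow>
     prob_space.indep_vars M (\<lambda>_. count_space UNIV)
        (\<lambda>j \<omega>. case j of Inl x \<Rightarrow> int (N x \<omega>) | Inr (x, i) \<Rightarrow> Y x i \<omega>)
        (range Inl \<union> {Inr (x, i) | x i. i \<ge> 1}) \<longrightarrow>
     (\<forall>x (m::nat). measure M {\<omega> \<in> space M. N x \<omega> = m} = lam ^ m / fact m * exp (- lam)) \<longrightarrow>
     (\<forall>x i (k::int). i \<ge> 1 \<longrightarrow> measure M {\<omega> \<in> space M. Y x i \<omega> = k} =
        (if k = 0 then 0 else \<bar>real_of_int k\<bar> powr (-(1 + \<alpha>)) / (2 * zeta_real (1 + \<alpha>)))) \<longrightarrow>
     (\<forall>c>0. \<exists>C n0. \<forall>(n::nat) (k::int). n \<ge> n0 \<longrightarrow> real_of_int k \<ge> c * real n \<longrightarrow>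
        \<bar>measure M {\<omega> \<in> space M. (\<Sum>x\<in>{- int n..int n}. \<Sum>i\<in>{1..N x \<omega>}. Y x i \<omega>) = k}
          - measure M {\<omega> \<in> space M. \<exists>x\<in>{- int n..int n}. \<exists>i\<in>{1..N x \<omega>}. Y x i \<omega> = k}\<bar>
        \<le> C * real n powr (- \<beta>) *
          measure M {\<omega> \<in> space M. \<exists>x\<in>{- int n..int n}. \<exists>i\<in>{1..N x \<omega>}. Y x i \<omega> = k})"
proof (rule exI[of _ "min (\<alpha> - 1) 1 / 2 / 2"], intro conjI allI impI)
  show "0 < min (\<alpha> - 1) 1 / 2 / 2" using assms by simp
  fix lam c :: real and M :: "'a measure"
    and N :: "int \<Rightarrow> 'a \<Rightarrow> nat" and Y :: "int \<Rightarrow> nat \<Rightarrow> 'a \<Rightarrow> int"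
  assume "0 < lam" "prob_space M"
    "prob_space.indep_vars M (\<lambda>_. count_space UNIV)
        (\<lambda>j \<omega>. case j of Inl x \<Rightarrow> int (N x \<omega>) | Inr (x, i) \<Rightarrow> Y x i \<omega>)
        (range Inl \<union> {Inr (x, i) | x i. i \<ge> 1})"
    "\<forall>x (m::nat). measure M {\<omega> \<in> space M. N x \<omega> = m} = lam ^ m / fact m * exp (- lam)"
    "\<forall>x i (k::int). i \<ge> 1 \<longrightarrow> measure M {\<omega> \<in> space M. Y x i \<omega> = k} =
        (if k = 0 then 0 else \<bar>real_of_int k\<bar> powr (-(1 + \<alpha>)) / (2 * zeta_real (1 + \<alpha>)))"
    and c: "0 < c"
  then obtain p where "power_law_poisson_model M N Y lam p \<alpha> (zeta_real (1 + \<alpha>))"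
    using ex_power_law_poisson_model[OF assms] by blast
  then interpret power_law_poisson_model M N Y lam p \<alpha> "zeta_real (1 + \<alpha>)" .
  have "min (\<alpha> - 1) 1 / 2 / 2 = theta / 2" by (simp add: theta_def)
  with prob_compound_sum_vs_some_jump_eq[OF c]
  show "\<exists>C n0. \<forall>(n::nat) (k::int). n \<ge> n0 \<longrightarrow> real_of_int k \<ge> c * real n \<longrightarrow>
      \<bar>measure M {\<omega> \<in> space M. (\<Sum>x\<in>{- int n..int n}. \<Sum>i\<in>{1..N x \<omega>}. Y x i \<omega>) = k}
        - measure M {\<omega> \<in> space M. \<exists>x\<in>{- int n..int n}. \<exists>i\<in>{1..N x \<omega>}. Y x i \<omega> = k}\<bar>
      \<le> C * real n powr (- (min (\<alpha> - 1) 1 / 2 / 2)) *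
        measure M {\<omega> \<in> space M. \<exists>x\<in>{- int n..int n}. \<exists>i\<in>{1..N x \<omega>}. Y x i \<omega> = k}"
    by (simp add: compound_sum_def some_jump_eq_def window_def)
qed

end
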